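(* Let $\Lambda$ be a finite measure on $[0,1]$ with $\Lambda(\{1\})=0$, let $(\Pi_t)_{t\ge0}$ be the $\Lambda$-coalescent and $\mathcal{F}_t=\sigma(\Pi_s: s\le t)$. Let $T>0$ and let $\mathcal{W}=\{w_i: i\in\mathbb{N}\}$ be a random, $\mathcal{F}_T$-measurable, infinite subset of $\mathbb{N}$ with $w_i<w_j$ whenever $i<j$, such that $\mathcal{W}$ contains precisely one element of each block of $\Pi_T$. For $n\in\mathbb{N}$ and $t\ge0$ let $\mathrm{bl}_{\Pi_t}(n)$ be the unique block of $\Pi_t$ containing $n$. Define a process $(\widetilde\Pi_t)_{t\ge T}$ of partitions of $\mathbb{N}$ by: $i$ and $j$ are in the same block of $\widetilde\Pi_t$ if and only if $\mathrm{bl}_{\Pi_t}(w_i)=\mathrm{bl}_{\Pi_t}(w_j)$. Then $(\widetilde\Pi_t)_{t\ge T}$ is a $\Lambda$-coalescent (with initial time $T$).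
   Context: For $n\in\mathbb{N}$, let $\iota_n$ be the restriction map from partitions of $\mathbb{N}$ to partitions of $\{1,\dots,n\}$. A $\Lambda$-coalescent with initial time $T\ge 0$ is a Markov process $(\Pi_t)_{t\ge T}$ with values in partitions of $\mathbb{N}$, with $\Pi_T$ the partition into singletons, such that for every $n$, $\iota_n(\Pi_t)$ is a Markov chain in which, whenever it has $i$ blocks, each particular $k$-tuple of blocks ($2\le k\le i$) merges into one block at rate $\lambda_{i,k}=\int_0^1x^{k-2}(1-x)^{i-k}\Lambda(dx)$, independently of all other $k$-tuples. "The $\Lambda$-coalescent" means the one with initial time $0$. *)

theory Defs
  imports "HOL-Probability.Probability"
begin

text \<open>Partitions of a set A, represented as sets of blocks.
  The paper's index set {1,2,...} is represented by the type nat = {0,1,...};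
  the paper's {1..n} becomes {..<n}.\<close>

definition is_part :: "nat set \<Rightarrow> nat set set \<Rightarrow> bool" where
  "is_part A P \<longleftrightarrow> (\<forall>B\<in>P. B \<noteq> {} \<and> B \<subseteq> A)
     \<and> (\<forall>B\<in>P. \<forall>C\<in>P. B \<noteq> C \<longrightarrow> B \<inter> C = {}) \<and> \<Union>P = A"

definition singletons :: "nat set \<Rightarrow> nat set set" where
  "singletons A = (\<lambda>x. {x}) ` A"

definition restr :: "nat \<Rightarrow> nat set set \<Rightarrow> nat set set" where
  "restr n P = ((\<lambda>B. B \<inter> {..<n}) ` P) - {{}}"

definition bl :: "nat set set \<Rightarrow> nat \<Rightarrow> nat set" where
  "bl P x = (THE B. B \<in> P \<and> x \<in> B)"

definition part_of_rel :: "(nat \<Rightarrow> nat \<Rightarrow> bool) \<Rightarrow> nat set set" where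
  "part_of_rel R = {{j. R i j} | i. True}"

definition states :: "nat \<Rightarrow> nat set set set" where
  "states n = {P. is_part {..<n} P}"

definition lam :: "real measure \<Rightarrow> nat \<Rightarrow> nat \<Rightarrow> real" where
  "lam \<Lambda> i k = integral\<^sup>L \<Lambda> (\<lambda>x. x ^ (k - 2) * (1 - x) ^ (i - k))"

text \<open>Off-diagonal rate: q arises from p by merging the k = card (p - q) >= 2 blocks
  p - q into one block (this tuple of blocks is uniquely determined by p and q).\<close>
definition rate_off :: "real measure \<Rightarrow> nat set set \<Rightarrow> nat set set \<Rightarrow> real" where
  "rate_off \<Lambda> p q = (if p \<noteq> q \<and> 2 \<le> card (p - q) \<and> q = insert (\<Union>(p - q)) (p \<inter> q)
      then lam \<Lambda> (card p) (card (p - q)) else 0)"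

definition Qmat :: "real measure \<Rightarrow> nat \<Rightarrow> nat set set \<Rightarrow> nat set set \<Rightarrow> real" where
  "Qmat \<Lambda> n p q = (if p = q then - (\<Sum>r\<in>states n - {p}. rate_off \<Lambda> p r) else rate_off \<Lambda> p q)"

fun Qpow :: "real measure \<Rightarrow> nat \<Rightarrow> nat \<Rightarrow> nat set set \<Rightarrow> nat set set \<Rightarrow> real" where
  "Qpow \<Lambda> n 0 p q = (if p = q then 1 else 0)"
| "Qpow \<Lambda> n (Suc m) p q = (\<Sum>r\<in>states n. Qmat \<Lambda> n p r * Qpow \<Lambda> n m r q)"

definition trans :: "real measure \<Rightarrow> nat \<Rightarrow> real \<Rightarrow> nat set set \<Rightarrow> nat set set \<Rightarrow> real" where
  "trans \<Lambda> n t p q = (\<Sum>m. t ^ m / fact m * Qpow \<Lambda> n m p q)"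

text \<open>Probability of a path of the chain started in p at time t and visiting
  the states q_i at the times s_i (list of (s_i, q_i)).\<close>
fun fdd :: "real measure \<Rightarrow> nat \<Rightarrow> real \<Rightarrow> nat set set \<Rightarrow> (real \<times> nat set set) list \<Rightarrow> real" where
  "fdd \<Lambda> n t p [] = 1"
| "fdd \<Lambda> n t p ((s, q) # xs) = trans \<Lambda> n (s - t) p q * fdd \<Lambda> n s q xs"

text \<open>Lambda-coalescent with initial time T on the probability space M:
  partition-valued, started in singletons at time T, and for every n the
  restriction to {..<n} is a continuous-time Markov chain with Q-matrix Qmat,
  expressed through its finite-dimensional distributions.\<close>
definition lambda_coalescent ::
  "real measure \<Rightarrow> 'a measure \<Rightarrow> real \<Rightarrow> (real \<Rightarrow> 'a \<Rightarrow> nat set set) \<Rightarrow> bool" where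
  "lambda_coalescent \<Lambda> M T Pr \<longleftrightarrow>
     prob_space M
   \<and> (\<forall>t\<ge>T. \<forall>\<omega>\<in>space M. is_part UNIV (Pr t \<omega>))
   \<and> (\<forall>\<omega>\<in>space M. Pr T \<omega> = singletons UNIV)
   \<and> (\<forall>t\<ge>T. \<forall>n p. {\<omega>\<in>space M. restr n (Pr t \<omega>) = p} \<in> sets M)
   \<and> (\<forall>n xs. sorted_wrt (<) (map fst xs) \<and> (\<forall>x\<in>set xs. T \<le> fst x \<and> snd x \<in> states n)
        \<longrightarrow> measure M {\<omega>\<in>space M. \<forall>x\<in>set xs. restr n (Pr (fst x) \<omega>) = snd x}
            = fdd \<Lambda> n T (singletons {..<n}) xs)"

text \<open>Natural filtration F_T = sigma(Pi_s : 0 <= s <= T), partitions carrying the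
  sigma-algebra generated by the restriction maps.\<close>
definition nat_filtration :: "'a measure \<Rightarrow> (real \<Rightarrow> 'a \<Rightarrow> nat set set) \<Rightarrow> real \<Rightarrow> 'a set set" where
  "nat_filtration M Pr T = sigma_sets (space M)
     {{\<omega>\<in>space M. restr n (Pr s \<omega>) = p} | s n p. 0 \<le> s \<and> s \<le> T}"

end

theory Submission
  imports Defs
begin

text \<open>Both the restriction to \<open>{..<n}\<close> and the relabelling of the blocks by the
  representatives \<open>w\<^sub>0 < w\<^sub>1 < \<dots>\<close> pull a partition back along an index map \<open>g\<close>: \<open>i\<close> and \<open>j\<close>
  share a block iff \<open>g i\<close> and \<open>g j\<close> do. The rates of the \<open>\<Lambda>\<close>-coalescent are consistent
  under pullbacks: the rates of all mergers of a partition \<open>p\<close> of \<open>{..<K}\<close> that pull back to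
  a given merger of the pullback of \<open>p\<close> add up to the rate of that merger, because
  \<open>lam \<Lambda> b k = (\<Sum>l\<le>u. (u choose l) * lam \<Lambda> (b + u) (k + l))\<close>. Hence the chains on partitions of finite sets are
  lumpable, and transition functions and finite-dimensional distributions push forward along
  pullbacks. On the \<open>\<F>\<^sub>T\<close>-measurable event that the first \<open>n\<close> representatives form a given list,
  the relabelled process restricted to \<open>{..<n}\<close> is the pullback of the coalescent restricted
  to a finite set, and it is in singletons at time \<open>T\<close>. The Markov property at the fixed
  time \<open>T\<close>, extended from cylinder events to \<open>\<F>\<^sub>T\<close> by Dynkin's \<open>\<pi>\<close>-\<open>\<lambda>\<close> theorem, then
  yields the finite-dimensional distributions of the \<open>\<Lambda>\<close>-coalescent on each such event.\<close>

section \<open>Partitions of \<open>{..<n}\<close> and their pullbacks\<close>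

lemma finite_states: "finite (states n)"
proof -
  have "states n \<subseteq> Pow (Pow {..<n})" by (auto simp: states_def is_part_def)
  thus ?thesis by (rule finite_subset) auto
qed

lemma finite_state: "p \<in> states n \<Longrightarrow> finite p"
  using finite_states by (auto simp: states_def is_part_def intro: finite_subset[of p "Pow {..<n}"])

lemma statesD:
  assumes "p \<in> states n"
  shows "\<And>B. B \<in> p \<Longrightarrow> B \<noteq> {}" "\<And>B. B \<in> p \<Longrightarrow> B \<subseteq> {..<n}"
    "\<And>B C. B \<in> p \<Longrightarrow> C \<in> p \<Longrightarrow> B \<noteq> C \<Longrightarrow> B \<inter> C = {}" "\<Union>p = {..<n}"
  using assms by (auto simp: states_def is_part_def)

lemma restr_states:
  assumes "is_part UNIV P"
  shows "restr n P \<in> states n"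
proof -
  have disj: "\<And>B C. B \<in> P \<Longrightarrow> C \<in> P \<Longrightarrow> B \<noteq> C \<Longrightarrow> B \<inter> C = {}" and cover: "\<Union>P = UNIV"
    using assms by (auto simp: is_part_def)
  have blocks: "\<forall>B\<in>restr n P. B \<noteq> {} \<and> B \<subseteq> {..<n}" unfolding restr_def by blast
  have "\<forall>B\<in>restr n P. \<forall>C\<in>restr n P. B \<noteq> C \<longrightarrow> B \<inter> C = {}"
  proof (intro ballI impI)
    fix B C assume BC: "B \<in> restr n P" "C \<in> restr n P" "B \<noteq> C"
    then obtain B' C' where "B' \<in> P" "C' \<in> P" "B = B' \<inter> {..<n}" "C = C' \<inter> {..<n}"
      by (auto simp: restr_def)
    thus "B \<inter> C = {}" using disj[of B' C'] BC(3) by auto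
  qed
  moreover have "\<Union>(restr n P) = {..<n}"
  proof
    show "{..<n} \<subseteq> \<Union>(restr n P)"
    proof
      fix i assume i: "i \<in> {..<n}"
      obtain B where "B \<in> P" "i \<in> B" using cover by blast
      hence "B \<inter> {..<n} \<in> restr n P" "i \<in> B \<inter> {..<n}" using i by (auto simp: restr_def)
      thus "i \<in> \<Union>(restr n P)" by blast
    qed
  qed (use blocks in blast)
  ultimately show ?thesis using blocks by (simp add: states_def is_part_def)
qed

lemma restr_restr:
  assumes "n \<le> m"
  shows "restr n (restr m P) = restr n P"
proof
  have cut: "\<And>B. B \<inter> {..<m} \<inter> {..<n} = B \<inter> {..<n}" using assms by auto
  show "restr n (restr m P) \<subseteq> restr n P"
  proof
    fix x assume "x \<in> restr n (restr m P)"
    then obtain B where "B \<in> P" "x = B \<inter> {..<m} \<inter> {..<n}" "x \<noteq> {}" unfolding restr_def by blast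
    thus "x \<in> restr n P" unfolding restr_def cut by blast
  qed
  show "restr n P \<subseteq> restr n (restr m P)"
  proof
    fix x assume "x \<in> restr n P"
    then obtain B where B: "B \<in> P" "x = B \<inter> {..<n}" "x \<noteq> {}" unfolding restr_def by blast
    hence "B \<inter> {..<m} \<in> restr m P" using assms unfolding restr_def by auto
    moreover have "x = B \<inter> {..<m} \<inter> {..<n}" using B(2) cut by simp
    ultimately show "x \<in> restr n (restr m P)" using B(3) unfolding restr_def by blast
  qed
qed

lemma restr_singletons: "restr n (singletons UNIV) = singletons {..<n}"
proof
  show "restr n (singletons UNIV) \<subseteq> singletons {..<n}"
  proof
    fix x assume "x \<in> restr n (singletons UNIV)"
    then obtain i where "x = {i} \<inter> {..<n}" "x \<noteq> {}" unfolding restr_def singletons_def by blast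
    hence "i < n" "x = {i}" by (auto split: if_splits)
    thus "x \<in> singletons {..<n}" unfolding singletons_def by blast
  qed
  show "singletons {..<n} \<subseteq> restr n (singletons UNIV)"
  proof
    fix x assume "x \<in> singletons {..<n}"
    then obtain i where "i < n" "x = {i}" unfolding singletons_def by blast
    hence "x = {i} \<inter> {..<n}" "x \<noteq> {}" by auto
    thus "x \<in> restr n (singletons UNIV)" unfolding restr_def singletons_def by blast
  qed
qed

definition pull_block :: "(nat \<Rightarrow> nat) \<Rightarrow> nat \<Rightarrow> nat set \<Rightarrow> nat set" where
  "pull_block g n B = {i. i < n \<and> g i \<in> B}"

definition pullback :: "(nat \<Rightarrow> nat) \<Rightarrow> nat \<Rightarrow> nat set set \<Rightarrow> nat set set" where
  "pullback g n P = pull_block g n ` P - {{}}"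

lemma pullback_states:
  assumes p: "p \<in> states K" and g: "\<forall>i<n. g i < K"
  shows "pullback g n p \<in> states n"
proof -
  note S = statesD[OF p]
  have "B \<inter> C = {}" if BC: "B \<in> pullback g n p" "C \<in> pullback g n p" "B \<noteq> C" for B C
  proof -
    obtain B' C' where "B' \<in> p" "C' \<in> p" "B = pull_block g n B'" "C = pull_block g n C'"
      using BC(1,2) by (auto simp: pullback_def)
    moreover have "B' \<inter> C' = {}" using S(3) calculation(1,2) BC(3) calculation(3,4) by metis
    ultimately show ?thesis by (auto simp: pull_block_def)
  qed
  moreover have "\<Union>(pullback g n p) = {..<n}"
  proof -
    have "i \<in> \<Union>(pullback g n p)" if "i < n" for i
    proof -
      obtain B where "B \<in> p" "g i \<in> B" using S(4) g \<open>i < n\<close> by blast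
      hence "i \<in> pull_block g n B" "pull_block g n B \<in> pullback g n p"
        using \<open>i < n\<close> by (auto simp: pullback_def pull_block_def)
      thus ?thesis by blast
    qed
    thus ?thesis by (auto simp: pullback_def pull_block_def)
  qed
  moreover have "\<forall>B\<in>pullback g n p. B \<noteq> {} \<and> B \<subseteq> {..<n}"
    by (auto simp: pullback_def pull_block_def)
  ultimately show ?thesis unfolding states_def is_part_def by blast
qed

lemma pull_block_inj:
  assumes "p \<in> states K" "B \<in> p" "B' \<in> p" "pull_block g n B = pull_block g n B'" "pull_block g n B \<noteq> {}"
  shows "B = B'"
proof -
  obtain i where "i \<in> pull_block g n B" using assms(5) by auto
  hence "g i \<in> B" "g i \<in> B'" using assms(4) by (auto simp: pull_block_def)
  thus ?thesis using statesD(3)[OF assms(1-3)] by blast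
qed

lemma card_pullback:
  assumes "p \<in> states K"
  shows "card p = card (pullback g n p) + card {B\<in>p. pull_block g n B = {}}"
proof -
  have inj: "inj_on (pull_block g n) {B\<in>p. pull_block g n B \<noteq> {}}"
    using pull_block_inj[OF assms] by (auto simp: inj_on_def)
  have "pullback g n p = pull_block g n ` {B\<in>p. pull_block g n B \<noteq> {}}"
    by (auto simp: pullback_def)
  hence "card (pullback g n p) = card {B\<in>p. pull_block g n B \<noteq> {}}"
    by (simp add: card_image[OF inj])
  moreover have "card p = card {B\<in>p. pull_block g n B \<noteq> {}} + card {B\<in>p. pull_block g n B = {}}"
  proof -
    have "p = {B\<in>p. pull_block g n B \<noteq> {}} \<union> {B\<in>p. pull_block g n B = {}}" by blast
    thus ?thesis using finite_state[OF assms]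
      by (metis (no_types, lifting) card_Un_disjoint disjoint_iff finite_Un mem_Collect_eq)
  qed
  ultimately show ?thesis by simp
qed

lemma restr_eq_pullback_id: "restr n P = pullback id n P"
proof -
  have "pull_block id n = (\<lambda>B. B \<inter> {..<n})" by (auto simp: pull_block_def)
  thus ?thesis by (simp add: restr_def pullback_def)
qed

lemma pullback_restr:
  assumes "\<forall>i<n. g i < K"
  shows "pullback g n (restr K P) = pullback g n P"
proof -
  have cut: "pull_block g n (B \<inter> {..<K}) = pull_block g n B" for B
    using assms by (auto simp: pull_block_def)
  have "pull_block g n ` restr K P - {{}} = pull_block g n ` ((\<lambda>B. B \<inter> {..<K}) ` P) - {{}}"
    by (auto simp: restr_def pull_block_def)
  also have "\<dots> = pull_block g n ` P - {{}}" using cut by (simp add: image_image)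
  finally show ?thesis by (simp add: pullback_def)
qed

lemma pullback_cong: "(\<And>i. i < n \<Longrightarrow> g i = g' i) \<Longrightarrow> pullback g n P = pullback g' n P"
proof -
  assume "\<And>i. i < n \<Longrightarrow> g i = g' i"
  hence "pull_block g n = pull_block g' n" unfolding pull_block_def by (intro ext) auto
  thus ?thesis by (simp add: pullback_def)
qed

definition merge_blocks :: "nat set set \<Rightarrow> nat set set \<Rightarrow> nat set set" where
  "merge_blocks P D = insert (\<Union>D) (P - D)"

lemma card_ge_2_obtain:
  assumes "2 \<le> card D"
  obtains a b where "a \<in> D" "b \<in> D" "a \<noteq> b"
proof -
  have "finite D" using assms by (metis card.infinite not_numeral_le_zero)
  thus ?thesis using assms that card_le_Suc0_iff_eq[of D] by fastforce
qed

lemma merge_blocks_Diff: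
  assumes p: "p \<in> states K" and D: "D \<subseteq> p" "2 \<le> card D"
  shows "p - merge_blocks p D = D"
proof -
  have "\<Union>D \<notin> p"
  proof
    assume "\<Union>D \<in> p"
    obtain B1 B2 where "B1 \<in> D" "B2 \<in> D" "B1 \<noteq> B2" using D(2) by (rule card_ge_2_obtain)
    then obtain B where "B \<in> D" "B \<noteq> \<Union>D" by blast
    hence "B \<inter> \<Union>D = {}" "B \<noteq> {}" using statesD(1,3)[OF p] \<open>\<Union>D \<in> p\<close> D(1) by blast+
    thus False using \<open>B \<in> D\<close> by blast
  qed
  thus ?thesis using D(1) by (auto simp: merge_blocks_def)
qed

lemma merge_blocks_neq:
  assumes "p \<in> states K" "D \<subseteq> p" "2 \<le> card D"
  shows "merge_blocks p D \<noteq> p"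
  using merge_blocks_Diff[OF assms] assms(3) by fastforce

lemma merge_blocks_states:
  assumes p: "p \<in> states K" and D: "D \<subseteq> p" "2 \<le> card D"
  shows "merge_blocks p D \<in> states K"
proof -
  note S = statesD[OF p]
  have "D \<noteq> {}" using D(2) by auto
  hence "\<Union>D \<noteq> {}" using S(1) D(1) by blast
  moreover have "\<Union>D \<subseteq> {..<K}" using S(2) D(1) by blast
  ultimately have blocks: "\<forall>B\<in>merge_blocks p D. B \<noteq> {} \<and> B \<subseteq> {..<K}"
    using S(1,2) by (auto simp: merge_blocks_def)
  have apart: "E \<inter> \<Union>D = {}" if "E \<in> p - D" for E
    using that S(3) D(1) by blast
  have "B \<inter> C = {}" if "B \<in> merge_blocks p D" "C \<in> merge_blocks p D" "B \<noteq> C" for B C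
    using that apart S(3)[of B C] unfolding merge_blocks_def by (auto simp: Int_commute)
  moreover have "\<Union>(merge_blocks p D) = \<Union>p"
    using D(1) by (auto simp: merge_blocks_def)
  ultimately show ?thesis using blocks S(4) unfolding states_def is_part_def by auto
qed

lemma merge_blocks_inj:
  assumes "p \<in> states K" "D \<subseteq> p" "2 \<le> card D" "D' \<subseteq> p" "2 \<le> card D'"
    and "merge_blocks p D = merge_blocks p D'"
  shows "D = D'"
proof -
  have "D = p - merge_blocks p D" using merge_blocks_Diff[OF assms(1-3)] by simp
  also have "\<dots> = D'" using merge_blocks_Diff[OF assms(1,4,5)] assms(6) by simp
  finally show ?thesis .
qed

definition is_merger :: "nat set set \<Rightarrow> nat set set \<Rightarrow> bool" where
  "is_merger p r \<longleftrightarrow> p \<noteq> r \<and> 2 \<le> card (p - r) \<and> r = insert (\<Union>(p - r)) (p \<inter> r)"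

lemma rate_off_is_merger:
  "rate_off \<Lambda> p r = (if is_merger p r then lam \<Lambda> (card p) (card (p - r)) else 0)"
  by (simp add: rate_off_def is_merger_def)

lemma is_merger_merge_blocks:
  assumes "p \<in> states K" "D \<subseteq> p" "2 \<le> card D"
  shows "is_merger p (merge_blocks p D)"
proof -
  have "p - merge_blocks p D = D" "p \<inter> merge_blocks p D = p - D"
    using merge_blocks_Diff[OF assms] by (auto simp: merge_blocks_def)
  thus ?thesis using merge_blocks_neq[OF assms] assms(3) by (simp add: is_merger_def merge_blocks_def)
qed

lemma is_mergerD:
  assumes "is_merger p r"
  shows "r = merge_blocks p (p - r)" "2 \<le> card (p - r)"
  using assms by (auto simp: is_merger_def merge_blocks_def Diff_Diff_Int)

lemma pullback_Diff:
  assumes p: "p \<in> states K" and D: "D \<subseteq> p"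
  shows "pull_block g n ` (p - D) - {{}} = pullback g n p - (pull_block g n ` D - {{}})"
proof
  show "pull_block g n ` (p - D) - {{}} \<subseteq> pullback g n p - (pull_block g n ` D - {{}})"
  proof
    fix x assume "x \<in> pull_block g n ` (p - D) - {{}}"
    then obtain B where B: "B \<in> p" "B \<notin> D" "x = pull_block g n B" "x \<noteq> {}" by auto
    have "x \<notin> pull_block g n ` D"
    proof
      assume "x \<in> pull_block g n ` D"
      then obtain B' where "B' \<in> D" "x = pull_block g n B'" by auto
      thus False using pull_block_inj[OF p B(1), of B' g n] B D by auto
    qed
    thus "x \<in> pullback g n p - (pull_block g n ` D - {{}})" using B by (auto simp: pullback_def)
  qed
qed (auto simp: pullback_def)

lemma pullback_merge_blocks:
  assumes p: "p \<in> states K" and g: "\<forall>i<n. g i < K" and D: "D \<subseteq> p"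
  defines "E \<equiv> pull_block g n ` D - {{}}"
  shows "E \<subseteq> pullback g n p"
    and "pullback g n (merge_blocks p D)
           = (if 2 \<le> card E then merge_blocks (pullback g n p) E else pullback g n p)"
proof -
  let ?P = "pullback g n p"
  show sub: "E \<subseteq> ?P" using D by (auto simp: E_def pullback_def)
  have union: "pull_block g n (\<Union>D) = \<Union>E" by (auto simp: E_def pull_block_def)
  have rest: "pull_block g n ` (p - D) - {{}} = ?P - E"
    unfolding E_def by (rule pullback_Diff[OF p D])
  have "pullback g n (merge_blocks p D) = insert (pull_block g n (\<Union>D)) (pull_block g n ` (p - D)) - {{}}"
    by (simp add: pullback_def merge_blocks_def)
  also have "\<dots> = insert (pull_block g n (\<Union>D)) (pull_block g n ` (p - D) - {{}}) - {{}}" by auto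
  finally have eq: "pullback g n (merge_blocks p D) = insert (\<Union>E) (?P - E) - {{}}"
    unfolding union rest .
  have nonempty: "{} \<notin> ?P" by (simp add: pullback_def)
  show "pullback g n (merge_blocks p D) = (if 2 \<le> card E then merge_blocks ?P E else ?P)"
  proof (cases "2 \<le> card E")
    case True
    hence "E \<noteq> {}" by auto
    then obtain e where "e \<in> E" by blast
    hence "e \<noteq> {}" "e \<subseteq> \<Union>E" using sub nonempty by auto
    hence "\<Union>E \<noteq> {}" by blast
    hence "insert (\<Union>E) (?P - E) - {{}} = merge_blocks ?P E"
      using nonempty unfolding merge_blocks_def by blast
    thus ?thesis using True eq by simp
  next
    case False
    have "finite E" using finite_state[OF pullback_states[OF p g]] sub by (rule finite_subset[rotated])
    moreover have "card E = 0 \<or> card E = 1" using False by auto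
    ultimately have "E = {} \<or> (\<exists>e. E = {e})" by (auto simp: card_1_singleton_iff)
    hence "insert (\<Union>E) (?P - E) - {{}} = ?P"
    proof (elim disjE exE)
      assume "E = {}" thus ?thesis using nonempty by auto
    next
      fix e assume "E = {e}" thus ?thesis using nonempty sub by auto
    qed
    thus ?thesis using False eq by simp
  qed
qed

section \<open>Consistency of the rates\<close>

lemma sum_Pow_card:
  assumes "finite A"
  shows "(\<Sum>U\<in>Pow A. h (card U)) = (\<Sum>l\<le>card A. of_nat (card A choose l) * (h l :: real))"
proof -
  have "card ` Pow A \<subseteq> {..card A}" using assms by (auto intro: card_mono)
  hence "(\<Sum>U\<in>Pow A. h (card U)) = (\<Sum>l\<le>card A. \<Sum>U\<in>{U \<in> Pow A. card U = l}. h (card U))"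
    using sum.group[of "Pow A" "{..card A}" card "\<lambda>U. h (card U)"] assms by simp
  also have "\<dots> = (\<Sum>l\<le>card A. of_nat (card A choose l) * h l)"
  proof (rule sum.cong[OF refl])
    fix l
    have "{U \<in> Pow A. card U = l} = {B. B \<subseteq> A \<and> card B = l}" by auto
    hence "card {U \<in> Pow A. card U = l} = card A choose l" using n_subsets[OF assms] by simp
    thus "(\<Sum>U\<in>{U \<in> Pow A. card U = l}. h (card U)) = of_nat (card A choose l) * h l" by simp
  qed
  finally show ?thesis .
qed

locale lambda_measure =
  fixes \<Lambda> :: "real measure"
  assumes finite_measure: "finite_measure \<Lambda>" and sets_eq_borel: "sets \<Lambda> = sets borel"
    and null_outside_unit_interval: "emeasure \<Lambda> (- {0..1}) = 0"
begin

lemma AE_unit_interval: "AE x in \<Lambda>. x \<in> {0..1}"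
proof (rule AE_I'[of "- {0..1}"])
  show "- {0..1} \<in> null_sets \<Lambda>"
    using null_outside_unit_interval sets_eq_borel by (simp add: null_sets_def)
qed auto

lemma integrable_monomial: "integrable \<Lambda> (\<lambda>x. c * (x ^ a * (1 - x) ^ b))"
proof -
  interpret finite_measure \<Lambda> by (rule finite_measure)
  have "(\<lambda>x::real. c * (x ^ a * (1 - x) ^ b)) \<in> borel_measurable \<Lambda>"
    unfolding measurable_cong_sets[OF sets_eq_borel refl] by measurable
  moreover have "AE x in \<Lambda>. norm (c * (x ^ a * (1 - x) ^ b)) \<le> \<bar>c\<bar>"
    using AE_unit_interval
  proof (rule AE_mp, intro AE_I2 impI)
    fix x :: real assume "x \<in> {0..1}"
    hence "0 \<le> x ^ a" "x ^ a \<le> 1" "0 \<le> (1 - x) ^ b" "(1 - x) ^ b \<le> 1"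
      by (auto intro: power_le_one)
    hence "0 \<le> x ^ a * (1 - x) ^ b" "x ^ a * (1 - x) ^ b \<le> 1"
      by (auto intro: mult_le_one)
    thus "norm (c * (x ^ a * (1 - x) ^ b)) \<le> \<bar>c\<bar>"
      by (simp add: abs_mult mult_left_le)
  qed
  ultimately show ?thesis by (intro integrable_const_bound) auto
qed

text \<open>Under the integral, the sum is the binomial expansion of \<open>(x + (1 - x)) ^ card A = 1\<close>.\<close>

lemma sum_Pow_lam:
  assumes "finite A" "2 \<le> k" "k \<le> c"
  shows "(\<Sum>U\<in>Pow A. lam \<Lambda> (c + card A) (k + card U)) = lam \<Lambda> c k"
proof -
  let ?u = "card A"
  let ?f = "\<lambda>l x. of_nat (?u choose l) * (x ^ (k + l - 2) * (1 - x) ^ (c + ?u - (k + l)))"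
  have "(\<Sum>U\<in>Pow A. lam \<Lambda> (c + ?u) (k + card U)) = (\<Sum>l\<le>?u. of_nat (?u choose l) * lam \<Lambda> (c + ?u) (k + l))"
    by (rule sum_Pow_card[OF assms(1)])
  also have "\<dots> = (\<Sum>l\<le>?u. integral\<^sup>L \<Lambda> (?f l))"
    by (simp add: lam_def)
  also have "\<dots> = integral\<^sup>L \<Lambda> (\<lambda>x. \<Sum>l\<le>?u. ?f l x)"
    by (rule Bochner_Integration.integral_sum[symmetric]) (rule integrable_monomial)
  also have "\<dots> = integral\<^sup>L \<Lambda> (\<lambda>x. x ^ (k - 2) * (1 - x) ^ (c - k))"
  proof (rule Bochner_Integration.integral_cong[OF refl])
    fix x :: real
    have "(\<Sum>l\<le>?u. ?f l x)
        = (\<Sum>l\<le>?u. (x ^ (k - 2) * (1 - x) ^ (c - k)) * (of_nat (?u choose l) * x ^ l * (1 - x) ^ (?u - l)))"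
    proof (rule sum.cong[OF refl])
      fix l assume "l \<in> {..?u}"
      hence "k + l - 2 = (k - 2) + l" "c + ?u - (k + l) = (c - k) + (?u - l)" using assms by auto
      thus "?f l x = (x ^ (k - 2) * (1 - x) ^ (c - k)) * (of_nat (?u choose l) * x ^ l * (1 - x) ^ (?u - l))"
        by (simp add: power_add)
    qed
    also have "\<dots> = (x ^ (k - 2) * (1 - x) ^ (c - k)) * (x + (1 - x)) ^ ?u"
      by (simp only: binomial_ring sum_distrib_left)
    finally show "(\<Sum>l\<le>?u. ?f l x) = x ^ (k - 2) * (1 - x) ^ (c - k)" by simp
  qed
  also have "\<dots> = lam \<Lambda> c k" by (simp add: lam_def)
  finally show ?thesis .
qed

end

lemma sum_rate_off_fibre:
  assumes p: "p \<in> states K"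
  shows "(\<Sum>r\<in>{r\<in>states K. pullback g n r = q}. rate_off \<Lambda> p r)
       = (\<Sum>D | D \<subseteq> p \<and> 2 \<le> card D \<and> pullback g n (merge_blocks p D) = q. lam \<Lambda> (card p) (card D))"
proof -
  define Ds where "Ds = {D. D \<subseteq> p \<and> 2 \<le> card D \<and> pullback g n (merge_blocks p D) = q}"
  have fin: "finite {r\<in>states K. pullback g n r = q}" using finite_states by simp
  have mergers: "{r\<in>{r\<in>states K. pullback g n r = q}. is_merger p r} = merge_blocks p ` Ds"
  proof
    show "{r\<in>{r\<in>states K. pullback g n r = q}. is_merger p r} \<subseteq> merge_blocks p ` Ds"
    proof
      fix r assume "r \<in> {r\<in>{r\<in>states K. pullback g n r = q}. is_merger p r}"
      hence r: "pullback g n r = q" "is_merger p r" by auto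
      hence "p - r \<in> Ds" using is_mergerD[OF r(2)] unfolding Ds_def by auto
      thus "r \<in> merge_blocks p ` Ds" using is_mergerD(1)[OF r(2)] by blast
    qed
    show "merge_blocks p ` Ds \<subseteq> {r\<in>{r\<in>states K. pullback g n r = q}. is_merger p r}"
      using merge_blocks_states[OF p] is_merger_merge_blocks[OF p] unfolding Ds_def by blast
  qed
  have inj: "inj_on (merge_blocks p) Ds"
    unfolding inj_on_def Ds_def using merge_blocks_inj[OF p] by blast
  have "(\<Sum>r\<in>{r\<in>states K. pullback g n r = q}. rate_off \<Lambda> p r)
      = (\<Sum>r\<in>{r\<in>{r\<in>states K. pullback g n r = q}. is_merger p r}. lam \<Lambda> (card p) (card (p - r)))"
    unfolding rate_off_is_merger by (rule sum.inter_filter[OF fin, symmetric])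
  also have "\<dots> = (\<Sum>D\<in>Ds. lam \<Lambda> (card p) (card (p - merge_blocks p D)))"
    unfolding mergers by (rule sum.reindex[OF inj, unfolded comp_def])
  also have "\<dots> = (\<Sum>D\<in>Ds. lam \<Lambda> (card p) (card D))"
    by (rule sum.cong[OF refl]) (simp add: Ds_def merge_blocks_Diff[OF p])
  finally show ?thesis unfolding Ds_def .
qed

lemma merger_of_pullback:
  assumes p: "p \<in> states K" and g: "\<forall>i<n. g i < K" and D: "D \<subseteq> p"
    and ne: "pullback g n (merge_blocks p D) \<noteq> pullback g n p"
  shows "\<exists>E\<subseteq>pullback g n p. 2 \<le> card E \<and> pullback g n (merge_blocks p D) = merge_blocks (pullback g n p) E"
  using pullback_merge_blocks[OF p g D] ne by (metis (no_types, lifting))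

lemma pull_blocks_eq_iff:
  assumes p: "p \<in> states K" and D: "D \<subseteq> p" and E: "E \<subseteq> pullback g n p"
  shows "pull_block g n ` D - {{}} = E
     \<longleftrightarrow> {B\<in>D. pull_block g n B \<noteq> {}} = {B\<in>p. pull_block g n B \<in> E}"
proof
  assume img: "pull_block g n ` D - {{}} = E"
  show "{B\<in>D. pull_block g n B \<noteq> {}} = {B\<in>p. pull_block g n B \<in> E}"
  proof
    show "{B\<in>D. pull_block g n B \<noteq> {}} \<subseteq> {B\<in>p. pull_block g n B \<in> E}" using img D by blast
    show "{B\<in>p. pull_block g n B \<in> E} \<subseteq> {B\<in>D. pull_block g n B \<noteq> {}}"
    proof
      fix B assume "B \<in> {B\<in>p. pull_block g n B \<in> E}"
      hence B: "B \<in> p" "pull_block g n B \<in> pull_block g n ` D - {{}}" using img by auto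
      then obtain B' where "B' \<in> D" "pull_block g n B = pull_block g n B'" "pull_block g n B \<noteq> {}" by auto
      hence "B = B'" using pull_block_inj[OF p B(1), of B'] D by auto
      thus "B \<in> {B\<in>D. pull_block g n B \<noteq> {}}" using \<open>B' \<in> D\<close> \<open>pull_block g n B \<noteq> {}\<close> by auto
    qed
  qed
next
  assume marked: "{B\<in>D. pull_block g n B \<noteq> {}} = {B\<in>p. pull_block g n B \<in> E}"
  have "pull_block g n ` D - {{}} = pull_block g n ` {B\<in>D. pull_block g n B \<noteq> {}}" by blast
  also have "\<dots> = pull_block g n ` {B\<in>p. pull_block g n B \<in> E}" unfolding marked ..
  also have "\<dots> = E" using E by (auto simp: pullback_def)
  finally show "pull_block g n ` D - {{}} = E" .
qed

lemma pullback_merge_blocks_eq_merge_iff: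
  assumes p: "p \<in> states K" and g: "\<forall>i<n. g i < K" and D: "D \<subseteq> p"
    and E: "E \<subseteq> pullback g n p" "2 \<le> card E"
  shows "2 \<le> card D \<and> pullback g n (merge_blocks p D) = merge_blocks (pullback g n p) E
     \<longleftrightarrow> pull_block g n ` D - {{}} = E"
proof
  let ?P = "pullback g n p" and ?E = "pull_block g n ` D - {{}}"
  have P: "?P \<in> states n" by (rule pullback_states[OF p g])
  note pm = pullback_merge_blocks[OF p g D]
  {
    assume "2 \<le> card D \<and> pullback g n (merge_blocks p D) = merge_blocks ?P E"
    hence eq: "pullback g n (merge_blocks p D) = merge_blocks ?P E" by blast
    have "2 \<le> card ?E"
    proof (rule ccontr)
      assume "\<not> 2 \<le> card ?E"
      hence "merge_blocks ?P E = ?P" using eq pm(2) by simp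
      thus False using merge_blocks_neq[OF P E] by contradiction
    qed
    hence "merge_blocks ?P ?E = merge_blocks ?P E" using eq pm(2) by simp
    thus "?E = E" using merge_blocks_inj[OF P pm(1) \<open>2 \<le> card ?E\<close> E] by simp
  next
    assume img: "?E = E"
    have "finite D" using finite_state[OF p] D by (rule finite_subset[rotated])
    hence "card E \<le> card D"
      using img card_image_le[of D "pull_block g n"] card_mono[of "pull_block g n ` D" ?E]
      by (metis Diff_subset finite_imageI le_trans)
    thus "2 \<le> card D \<and> pullback g n (merge_blocks p D) = merge_blocks ?P E"
      using E(2) pm(2) img by simp
  }
qed

lemma mergers_onto_merge_blocks:
  assumes p: "p \<in> states K" and g: "\<forall>i<n. g i < K"
    and E: "E \<subseteq> pullback g n p" "2 \<le> card E"
  defines "marked \<equiv> {B\<in>p. pull_block g n B \<in> E}" and "unmarked \<equiv> {B\<in>p. pull_block g n B = {}}"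
  shows "{D. D \<subseteq> p \<and> 2 \<le> card D \<and> pullback g n (merge_blocks p D) = merge_blocks (pullback g n p) E}
       = (\<lambda>U. marked \<union> U) ` Pow unmarked"
proof -
  have split: "D \<subseteq> p \<and> {B\<in>D. pull_block g n B \<noteq> {}} = marked
      \<longleftrightarrow> (\<exists>U\<in>Pow unmarked. D = marked \<union> U)" for D
  proof
    assume "D \<subseteq> p \<and> {B\<in>D. pull_block g n B \<noteq> {}} = marked"
    hence "D \<inter> unmarked \<in> Pow unmarked" "D = marked \<union> (D \<inter> unmarked)"
      unfolding unmarked_def by blast+
    thus "\<exists>U\<in>Pow unmarked. D = marked \<union> U" by blast
  next
    assume "\<exists>U\<in>Pow unmarked. D = marked \<union> U"
    then obtain U where U: "U \<subseteq> unmarked" "D = marked \<union> U" by blast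
    have "{} \<notin> E" using E(1) by (auto simp: pullback_def)
    thus "D \<subseteq> p \<and> {B\<in>D. pull_block g n B \<noteq> {}} = marked"
      using U by (auto simp: marked_def unmarked_def)
  qed
  have char: "D \<subseteq> p \<and> 2 \<le> card D \<and> pullback g n (merge_blocks p D) = merge_blocks (pullback g n p) E
      \<longleftrightarrow> (\<exists>U\<in>Pow unmarked. D = marked \<union> U)" for D
  proof (cases "D \<subseteq> p")
    case D: True
    have "D \<subseteq> p \<and> 2 \<le> card D \<and> pullback g n (merge_blocks p D) = merge_blocks (pullback g n p) E
        \<longleftrightarrow> pull_block g n ` D - {{}} = E"
      using pullback_merge_blocks_eq_merge_iff[OF p g D E] D by simp
    also have "\<dots> \<longleftrightarrow> {B\<in>D. pull_block g n B \<noteq> {}} = marked"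
      using pull_blocks_eq_iff[OF p D E(1)] by (simp add: marked_def)
    also have "\<dots> \<longleftrightarrow> (\<exists>U\<in>Pow unmarked. D = marked \<union> U)" using split[of D] D by simp
    finally show ?thesis .
  next
    case False
    thus ?thesis by (auto simp: marked_def unmarked_def)
  qed
  show ?thesis
  proof (intro set_eqI iffI)
    fix D assume "D \<in> {D. D \<subseteq> p \<and> 2 \<le> card D \<and> pullback g n (merge_blocks p D) = merge_blocks (pullback g n p) E}"
    thus "D \<in> (\<lambda>U. marked \<union> U) ` Pow unmarked" using char[of D] by (simp add: image_iff)
  next
    fix D assume "D \<in> (\<lambda>U. marked \<union> U) ` Pow unmarked"
    thus "D \<in> {D. D \<subseteq> p \<and> 2 \<le> card D \<and> pullback g n (merge_blocks p D) = merge_blocks (pullback g n p) E}"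
      using char[of D] by (simp add: image_iff)
  qed
qed

lemma sum_Un_Pow_card:
  assumes "finite A" "finite U" "A \<inter> U = {}"
  shows "(\<Sum>D\<in>(\<lambda>V. A \<union> V) ` Pow U. f (card D)) = (\<Sum>V\<in>Pow U. f (card A + card V))"
proof -
  have "inj_on (\<lambda>V. A \<union> V) (Pow U)"
  proof (rule inj_onI)
    fix V V' assume "V \<in> Pow U" "V' \<in> Pow U" "A \<union> V = A \<union> V'"
    moreover have "(A \<union> V) \<inter> U = (A \<union> V') \<inter> U" using calculation(3) by simp
    ultimately show "V = V'" using assms(3) by blast
  qed
  moreover have "card (A \<union> V) = card A + card V" if "V \<in> Pow U" for V
    using that assms by (subst card_Un_disjoint) (auto intro: finite_subset)
  ultimately show ?thesis by (simp add: sum.reindex)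
qed

context lambda_measure
begin

lemma sum_rate_off_pullback:
  assumes p: "p \<in> states K" and g: "\<forall>i<n. g i < K" and ne: "q \<noteq> pullback g n p"
  shows "(\<Sum>r\<in>{r\<in>states K. pullback g n r = q}. rate_off \<Lambda> p r) = rate_off \<Lambda> (pullback g n p) q"
proof (cases "\<exists>E\<subseteq>pullback g n p. 2 \<le> card E \<and> q = merge_blocks (pullback g n p) E")
  case True
  let ?P = "pullback g n p"
  obtain E where E: "E \<subseteq> ?P" "2 \<le> card E" and q: "q = merge_blocks ?P E" using True by blast
  define marked where "marked = {B\<in>p. pull_block g n B \<in> E}"
  define unmarked where "unmarked = {B\<in>p. pull_block g n B = {}}"
  have P: "?P \<in> states n" by (rule pullback_states[OF p g])
  have "finite p" by (rule finite_state[OF p])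
  hence fin: "finite marked" "finite unmarked" by (auto simp: marked_def unmarked_def)
  have "{} \<notin> E" using E(1) by (auto simp: pullback_def)
  hence disj: "marked \<inter> unmarked = {}" by (auto simp: marked_def unmarked_def)
  have "pull_block g n ` marked = E" using E(1) by (auto simp: marked_def pullback_def)
  moreover have "inj_on (pull_block g n) marked"
  proof (rule inj_onI)
    fix B B' assume B: "B \<in> marked" "B' \<in> marked" and eq: "pull_block g n B = pull_block g n B'"
    hence "pull_block g n B \<noteq> {}" using \<open>{} \<notin> E\<close> by (auto simp: marked_def)
    thus "B = B'" using pull_block_inj[OF p _ _ eq] B by (simp add: marked_def)
  qed
  ultimately have card_marked: "card marked = card E" by (metis card_image)
  have "(\<Sum>r\<in>{r\<in>states K. pullback g n r = q}. rate_off \<Lambda> p r)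
      = (\<Sum>D\<in>(\<lambda>U. marked \<union> U) ` Pow unmarked. lam \<Lambda> (card p) (card D))"
    using sum_rate_off_fibre[OF p] mergers_onto_merge_blocks[OF p g E] q
    unfolding marked_def unmarked_def by simp
  also have "\<dots> = (\<Sum>U\<in>Pow unmarked. lam \<Lambda> (card ?P + card unmarked) (card E + card U))"
    using sum_Un_Pow_card[OF fin disj] card_pullback[OF p, of g n] card_marked
    by (simp add: unmarked_def)
  also have "\<dots> = lam \<Lambda> (card ?P) (card E)"
    using sum_Pow_lam[OF fin(2) E(2)] card_mono[OF finite_state[OF P] E(1)] by simp
  also have "\<dots> = rate_off \<Lambda> ?P q"
    using is_merger_merge_blocks[OF P E] merge_blocks_Diff[OF P E] q by (simp add: rate_off_is_merger)
  finally show ?thesis .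
next
  case False
  hence none: "{D. D \<subseteq> p \<and> 2 \<le> card D \<and> pullback g n (merge_blocks p D) = q} = {}"
    using merger_of_pullback[OF p g] ne by blast
  have "rate_off \<Lambda> (pullback g n p) q = 0"
    using False is_mergerD by (fastforce simp: rate_off_is_merger)
  thus ?thesis unfolding sum_rate_off_fibre[OF p] none by simp
qed

lemma sum_Qmat_pullback:
  assumes p: "p \<in> states K" and g: "\<forall>i<n. g i < K"
  shows "(\<Sum>r\<in>{r\<in>states K. pullback g n r = q}. Qmat \<Lambda> K p r) = Qmat \<Lambda> n (pullback g n p) q"
proof (cases "q = pullback g n p")
  case False
  have "(\<Sum>r\<in>{r\<in>states K. pullback g n r = q}. Qmat \<Lambda> K p r)
      = (\<Sum>r\<in>{r\<in>states K. pullback g n r = q}. rate_off \<Lambda> p r)"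
    by (rule sum.cong[OF refl]) (use False in \<open>auto simp: Qmat_def\<close>)
  thus ?thesis using sum_rate_off_pullback[OF p g False] False by (simp add: Qmat_def)
next
  case True
  let ?P = "pullback g n p"
  define S where "S = {r\<in>states K. pullback g n r = ?P}"
  have fin: "finite S" using finite_states by (simp add: S_def)
  have "p \<in> S" using p by (simp add: S_def)
  have "(\<Sum>r\<in>S. Qmat \<Lambda> K p r) = Qmat \<Lambda> K p p + (\<Sum>r\<in>S - {p}. Qmat \<Lambda> K p r)"
    using sum.remove[OF fin \<open>p \<in> S\<close>] by simp
  also have "(\<Sum>r\<in>S - {p}. Qmat \<Lambda> K p r) = (\<Sum>r\<in>S - {p}. rate_off \<Lambda> p r)"
    by (rule sum.cong[OF refl]) (auto simp: Qmat_def)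
  also have "Qmat \<Lambda> K p p = - (\<Sum>r\<in>S - {p}. rate_off \<Lambda> p r) - (\<Sum>r\<in>states K - S. rate_off \<Lambda> p r)"
  proof -
    have "states K - {p} = (S - {p}) \<union> (states K - S)" "(S - {p}) \<inter> (states K - S) = {}"
      using \<open>p \<in> S\<close> by (auto simp: S_def)
    thus ?thesis using fin finite_states[of K] by (simp add: Qmat_def sum.union_disjoint)
  qed
  also have "(\<Sum>r\<in>states K - S. rate_off \<Lambda> p r)
      = (\<Sum>q'\<in>states n - {?P}. \<Sum>r\<in>{r\<in>states K - S. pullback g n r = q'}. rate_off \<Lambda> p r)"
    using pullback_states[OF _ g] finite_states
    by (intro sum.group[symmetric]) (auto simp: S_def)
  also have "\<dots> = (\<Sum>q'\<in>states n - {?P}. rate_off \<Lambda> ?P q')"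
  proof (rule sum.cong[OF refl])
    fix q' assume q': "q' \<in> states n - {?P}"
    hence "{r\<in>states K - S. pullback g n r = q'} = {r\<in>states K. pullback g n r = q'}" by (auto simp: S_def)
    thus "(\<Sum>r\<in>{r\<in>states K - S. pullback g n r = q'}. rate_off \<Lambda> p r) = rate_off \<Lambda> ?P q'"
      using sum_rate_off_pullback[OF p g, of q'] q' by simp
  qed
  finally show ?thesis using True by (simp add: Qmat_def S_def)
qed

end

section \<open>Lumpability of the restricted chains\<close>

lemma listset_iff: "qs \<in> listset As \<longleftrightarrow> list_all2 (\<in>) qs As"
proof (induction As arbitrary: qs)
  case Nil thus ?case by auto
next
  case (Cons A As) thus ?case by (cases qs) (auto simp: set_Cons_def)
qed

lemma set_Cons_img: "set_Cons A X = (\<lambda>(a, x). a # x) ` (A \<times> X)"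
  by (auto simp: set_Cons_def)

lemma finite_listset: "\<forall>A\<in>set As. finite A \<Longrightarrow> finite (listset As)"
  by (induction As) (auto simp: set_Cons_img)

lemma sum_set_Cons:
  assumes "finite A" "finite X"
  shows "(\<Sum>qs\<in>set_Cons A X. f qs) = (\<Sum>a\<in>A. \<Sum>x\<in>X. f (a # x))"
proof -
  have inj: "inj_on (\<lambda>(a, x). a # x) (A \<times> X)" by (auto simp: inj_on_def)
  have "(\<Sum>qs\<in>set_Cons A X. f qs) = (\<Sum>y\<in>A \<times> X. f (case y of (a, x) \<Rightarrow> a # x))"
    unfolding set_Cons_img by (rule sum.reindex[OF inj, unfolded comp_def])
  also have "\<dots> = (\<Sum>a\<in>A. \<Sum>x\<in>X. f (a # x))"
    by (simp add: sum.cartesian_product split_beta)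
  finally show ?thesis .
qed

lemma sorted_list_of_set_split:
  fixes A B :: "'a::linorder set"
  assumes "finite A" "finite B" "\<forall>x\<in>A. x < T" "\<forall>x\<in>B. T < x"
  shows "sorted_list_of_set (A \<union> {T} \<union> B) = sorted_list_of_set A @ T # sorted_list_of_set B"
proof -
  let ?l = "sorted_list_of_set A @ T # sorted_list_of_set B"
  have "sorted_wrt (<) ?l"
    using assms by (auto simp: sorted_wrt_append intro: less_trans)
  hence "sorted ?l" "distinct ?l" by (auto simp: strict_sorted_iff)
  moreover have "set ?l = A \<union> {T} \<union> B" using assms by auto
  ultimately show ?thesis using sorted_list_of_set.idem_if_sorted_distinct[of ?l] by simp
qed

lemma sorted_list_of_set_sorted: "sorted_wrt (<) (xs :: 'a::linorder list) \<Longrightarrow> sorted_list_of_set (set xs) = xs"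
  using sorted_list_of_set.idem_if_sorted_distinct[of xs] by (simp add: strict_sorted_iff)

lemma Ball_set_zip_iff: "length xs = length ys \<Longrightarrow> (\<forall>x\<in>set (zip xs ys). P x) \<longleftrightarrow> (\<forall>i<length xs. P (xs ! i, ys ! i))"
  by (simp add: set_zip) (metis)

text \<open>The right-hand side has the shape that \<open>fdd_eq_fdd_sets\<close> and \<open>fdd_sets_pullback\<close>
  rewrite.\<close>

lemma map_fibres_sorted_list_of_set:
  assumes "sorted_wrt (<) (map fst xs)"
  shows "map (\<lambda>s. (s, {r. \<forall>x\<in>set xs. fst x = s \<longrightarrow> f r = snd x})) (sorted_list_of_set (fst ` set xs))
       = map (\<lambda>(s, S). (s, {r. f r \<in> S})) (map (\<lambda>(s, q). (s, {q})) xs)"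
proof -
  have "inj_on fst (set xs)" using assms by (simp add: strict_sorted_iff distinct_map)
  hence "{r. \<forall>x'\<in>set xs. fst x' = fst x \<longrightarrow> f r = snd x'} = {r. f r \<in> {snd x}}" if "x \<in> set xs" for x
    using that by (auto simp: inj_on_def)
  moreover have "sorted_list_of_set (fst ` set xs) = map fst xs"
    using sorted_list_of_set_sorted[OF assms] by simp
  ultimately show ?thesis by (auto simp: split_beta)
qed

fun fdd_sets :: "real measure \<Rightarrow> nat \<Rightarrow> real \<Rightarrow> nat set set \<Rightarrow> (real \<times> nat set set set) list \<Rightarrow> real" where
  "fdd_sets \<Lambda> n t p [] = 1"
| "fdd_sets \<Lambda> n t p ((s, S) # xs) = (\<Sum>q\<in>S \<inter> states n. trans \<Lambda> n (s - t) p q * fdd_sets \<Lambda> n s q xs)"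

lemma trans_0: "trans \<Lambda> n 0 p q = (if p = q then 1 else 0)"
proof -
  have "trans \<Lambda> n 0 p q = (\<Sum>m\<in>{0}. 0 ^ m / fact m * Qpow \<Lambda> n m p q)"
    unfolding trans_def by (rule suminf_finite) auto
  thus ?thesis by simp
qed

lemma fdd_sets_Cons_same_time:
  assumes "p \<in> states n"
  shows "fdd_sets \<Lambda> n t p ((t, S) # xs) = (if p \<in> S then fdd_sets \<Lambda> n t p xs else 0)"
proof -
  have "fdd_sets \<Lambda> n t p ((t, S) # xs) = (\<Sum>q\<in>S \<inter> states n. if p = q then fdd_sets \<Lambda> n t q xs else 0)"
    by (auto simp: trans_0 intro!: sum.cong)
  also have "\<dots> = (if p \<in> S \<inter> states n then fdd_sets \<Lambda> n t p xs else 0)"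
    using finite_states[of n] by (simp add: sum.delta)
  finally show ?thesis using assms by simp
qed

lemma fdd_eq_fdd_sets: "\<forall>x\<in>set xs. snd x \<in> states n \<Longrightarrow> fdd \<Lambda> n t p xs = fdd_sets \<Lambda> n t p (map (\<lambda>(s,q). (s, {q})) xs)"
proof (induction xs arbitrary: t p)
  case Nil thus ?case by simp
next
  case (Cons x xs)
  obtain s q where x: "x = (s, q)" by (cases x)
  have q: "q \<in> states n" using Cons.prems x by auto
  have "{q} \<inter> states n = {q}" using q by auto
  thus ?case using Cons x by simp
qed

lemma Qpow_bound:
  fixes \<Lambda> :: "real measure" and n :: nat
  defines "B \<equiv> 1 + (\<Sum>p\<in>states n. \<Sum>r\<in>states n. \<bar>Qmat \<Lambda> n p r\<bar>)"
  shows "p \<in> states n \<Longrightarrow> \<bar>Qpow \<Lambda> n m p q\<bar> \<le> B ^ m"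
proof (induction m arbitrary: p)
  case 0 thus ?case by simp
next
  case (Suc m)
  have B0: "0 \<le> B" unfolding B_def by (simp add: sum_nonneg add_nonneg_nonneg)
  have "\<bar>Qpow \<Lambda> n (Suc m) p q\<bar> \<le> (\<Sum>r\<in>states n. \<bar>Qmat \<Lambda> n p r * Qpow \<Lambda> n m r q\<bar>)"
    by (simp add: sum_abs)
  also have "\<dots> \<le> (\<Sum>r\<in>states n. \<bar>Qmat \<Lambda> n p r\<bar> * B ^ m)"
    by (rule sum_mono) (simp add: abs_mult Suc.IH mult_left_mono)
  also have "\<dots> = (\<Sum>r\<in>states n. \<bar>Qmat \<Lambda> n p r\<bar>) * B ^ m" by (simp add: sum_distrib_right)
  also have "\<dots> \<le> B * B ^ m"
  proof (rule mult_right_mono)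
    have "(\<Sum>r\<in>states n. \<bar>Qmat \<Lambda> n p r\<bar>) \<le> (\<Sum>p\<in>states n. \<Sum>r\<in>states n. \<bar>Qmat \<Lambda> n p r\<bar>)"
      using member_le_sum[of p "states n" "\<lambda>p. \<Sum>r\<in>states n. \<bar>Qmat \<Lambda> n p r\<bar>"] Suc.prems finite_states
      by (simp add: sum_nonneg)
    thus "(\<Sum>r\<in>states n. \<bar>Qmat \<Lambda> n p r\<bar>) \<le> B" unfolding B_def by simp
    show "0 \<le> B ^ m" using B0 by simp
  qed
  finally show ?case by simp
qed

lemma summable_trans_series:
  assumes "p \<in> states n"
  shows "summable (\<lambda>m. t ^ m / fact m * Qpow \<Lambda> n m p q)"
proof -
  define B where "B = 1 + (\<Sum>p\<in>states n. \<Sum>r\<in>states n. \<bar>Qmat \<Lambda> n p r\<bar>)"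
  have b: "\<And>m. \<bar>Qpow \<Lambda> n m p q\<bar> \<le> B ^ m" using Qpow_bound[OF assms] unfolding B_def by blast
  have s: "summable (\<lambda>m. inverse (fact m) * (\<bar>t\<bar> * B) ^ m)" by (rule summable_exp)
  show ?thesis
  proof (rule summable_comparison_test'[OF s])
    fix m :: nat
    have "norm (t ^ m / fact m * Qpow \<Lambda> n m p q) = \<bar>t\<bar> ^ m / fact m * \<bar>Qpow \<Lambda> n m p q\<bar>"
      by (simp add: abs_mult power_abs)
    also have "\<dots> \<le> \<bar>t\<bar> ^ m / fact m * B ^ m"
      by (rule mult_left_mono[OF b]) simp
    also have "\<dots> = inverse (fact m) * (\<bar>t\<bar> * B) ^ m" by (simp add: power_mult_distrib field_simps)
    finally show "norm (t ^ m / fact m * Qpow \<Lambda> n m p q) \<le> inverse (fact m) * (\<bar>t\<bar> * B) ^ m" .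
  qed
qed

context lambda_measure
begin

lemma sum_Qpow_pullback:
  assumes g: "\<forall>i<n. g i < K"
  shows "\<rho> \<in> states K \<Longrightarrow> (\<Sum>r\<in>{r\<in>states K. pullback g n r = q}. Qpow \<Lambda> K m \<rho> r) = Qpow \<Lambda> n m (pullback g n \<rho>) q"
proof (induction m arbitrary: \<rho>)
  case 0
  have f: "finite {r\<in>states K. pullback g n r = q}" using finite_states by simp
  have "(\<Sum>r\<in>{r\<in>states K. pullback g n r = q}. Qpow \<Lambda> K 0 \<rho> r) = (\<Sum>r\<in>{r\<in>states K. pullback g n r = q}. if \<rho> = r then 1 else 0)"
    by simp
  also have "\<dots> = (if \<rho> \<in> {r\<in>states K. pullback g n r = q} then 1 else 0)" by (rule sum.delta'[OF f])
  finally show ?case using 0 by simp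
next
  case (Suc m)
  let ?S = "\<lambda>q. {r\<in>states K. pullback g n r = q}"
  have fK: "finite (states K)" by (rule finite_states)
  have "(\<Sum>r\<in>?S q. Qpow \<Lambda> K (Suc m) \<rho> r) = (\<Sum>r\<in>?S q. \<Sum>u\<in>states K. Qmat \<Lambda> K \<rho> u * Qpow \<Lambda> K m u r)"
    by simp
  also have "\<dots> = (\<Sum>u\<in>states K. \<Sum>r\<in>?S q. Qmat \<Lambda> K \<rho> u * Qpow \<Lambda> K m u r)" by (rule sum.swap)
  also have "\<dots> = (\<Sum>u\<in>states K. Qmat \<Lambda> K \<rho> u * Qpow \<Lambda> n m (pullback g n u) q)"
    by (rule sum.cong[OF refl]) (simp add: sum_distrib_left[symmetric] Suc.IH)
  also have "\<dots> = (\<Sum>v\<in>states n. \<Sum>u\<in>{x. x \<in> states K \<and> pullback g n x = v}. Qmat \<Lambda> K \<rho> u * Qpow \<Lambda> n m (pullback g n u) q)"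
  proof -
    have im: "pullback g n ` states K \<subseteq> states n" using pullback_states[OF _ g] by auto
    show ?thesis by (rule sum.group[OF fK finite_states im, symmetric])
  qed
  also have "\<dots> = (\<Sum>v\<in>states n. Qmat \<Lambda> n (pullback g n \<rho>) v * Qpow \<Lambda> n m v q)"
  proof (rule sum.cong[OF refl])
    fix v assume v: "v \<in> states n"
    have "(\<Sum>u\<in>{x. x \<in> states K \<and> pullback g n x = v}. Qmat \<Lambda> K \<rho> u * Qpow \<Lambda> n m (pullback g n u) q)
        = (\<Sum>u\<in>{x. x \<in> states K \<and> pullback g n x = v}. Qmat \<Lambda> K \<rho> u * Qpow \<Lambda> n m v q)" by simp
    also have "\<dots> = (\<Sum>u\<in>?S v. Qmat \<Lambda> K \<rho> u) * Qpow \<Lambda> n m v q" by (simp add: sum_distrib_right)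
    also have "\<dots> = Qmat \<Lambda> n (pullback g n \<rho>) v * Qpow \<Lambda> n m v q" using sum_Qmat_pullback[OF Suc.prems g] by simp
    finally show "(\<Sum>u\<in>{x. x \<in> states K \<and> pullback g n x = v}. Qmat \<Lambda> K \<rho> u * Qpow \<Lambda> n m (pullback g n u) q)
        = Qmat \<Lambda> n (pullback g n \<rho>) v * Qpow \<Lambda> n m v q" .
  qed
  also have "\<dots> = Qpow \<Lambda> n (Suc m) (pullback g n \<rho>) q" by simp
  finally show ?case .
qed

lemma sum_trans_pullback:
  assumes g: "\<forall>i<n. g i < K" and \<rho>: "\<rho> \<in> states K"
  shows "(\<Sum>r\<in>{r\<in>states K. pullback g n r = q}. trans \<Lambda> K t \<rho> r) = trans \<Lambda> n t (pullback g n \<rho>) q"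
proof -
  have "(\<Sum>r\<in>{r\<in>states K. pullback g n r = q}. trans \<Lambda> K t \<rho> r)
     = (\<Sum>m. \<Sum>r\<in>{r\<in>states K. pullback g n r = q}. t ^ m / fact m * Qpow \<Lambda> K m \<rho> r)"
    unfolding trans_def by (rule suminf_sum[symmetric]) (rule summable_trans_series[OF \<rho>])
  also have "\<dots> = (\<Sum>m. t ^ m / fact m * Qpow \<Lambda> n m (pullback g n \<rho>) q)"
  proof (rule suminf_cong)
    fix m
    have "(\<Sum>r\<in>{r\<in>states K. pullback g n r = q}. t ^ m / fact m * Qpow \<Lambda> K m \<rho> r)
        = t ^ m / fact m * (\<Sum>r\<in>{r\<in>states K. pullback g n r = q}. Qpow \<Lambda> K m \<rho> r)"
      by (rule sum_distrib_left[symmetric])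
    thus "(\<Sum>r\<in>{r\<in>states K. pullback g n r = q}. t ^ m / fact m * Qpow \<Lambda> K m \<rho> r)
        = t ^ m / fact m * Qpow \<Lambda> n m (pullback g n \<rho>) q" using sum_Qpow_pullback[OF g \<rho>] by simp
  qed
  finally show ?thesis unfolding trans_def .
qed

lemma fdd_sets_pullback:
  assumes g: "\<forall>i<n. g i < K"
  shows "\<rho> \<in> states K \<Longrightarrow> fdd_sets \<Lambda> K t \<rho> (map (\<lambda>(s,S). (s, {r. pullback g n r \<in> S})) L) = fdd_sets \<Lambda> n t (pullback g n \<rho>) L"
proof (induction L arbitrary: t \<rho>)
  case Nil thus ?case by simp
next
  case (Cons x L)
  obtain s S where x: "x = (s, S)" by (cases x)
  let ?A = "{r. pullback g n r \<in> S} \<inter> states K"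
  have fA: "finite ?A" using finite_states by simp
  have im: "pullback g n ` ?A \<subseteq> S \<inter> states n" using pullback_states[OF _ g] by auto
  have "fdd_sets \<Lambda> K t \<rho> (map (\<lambda>(s,S). (s, {r. pullback g n r \<in> S})) (x # L))
      = (\<Sum>r\<in>?A. trans \<Lambda> K (s - t) \<rho> r * fdd_sets \<Lambda> n s (pullback g n r) L)"
    using Cons.IH by (simp add: x)
  also have "\<dots> = (\<Sum>q\<in>S \<inter> states n. \<Sum>r\<in>{x. x \<in> ?A \<and> pullback g n x = q}. trans \<Lambda> K (s - t) \<rho> r * fdd_sets \<Lambda> n s (pullback g n r) L)"
  proof -
    have fT: "finite (S \<inter> states n)" using finite_states by simp
    show ?thesis by (rule sum.group[OF fA fT im, symmetric])
  qed
  also have "\<dots> = (\<Sum>q\<in>S \<inter> states n. trans \<Lambda> n (s - t) (pullback g n \<rho>) q * fdd_sets \<Lambda> n s q L)"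
  proof (rule sum.cong[OF refl])
    fix q assume q: "q \<in> S \<inter> states n"
    have e: "{x. x \<in> ?A \<and> pullback g n x = q} = {r\<in>states K. pullback g n r = q}" using q by auto
    have "(\<Sum>r\<in>{x. x \<in> ?A \<and> pullback g n x = q}. trans \<Lambda> K (s - t) \<rho> r * fdd_sets \<Lambda> n s (pullback g n r) L)
        = (\<Sum>r\<in>{r\<in>states K. pullback g n r = q}. trans \<Lambda> K (s - t) \<rho> r) * fdd_sets \<Lambda> n s q L"
      unfolding e by (simp add: sum_distrib_right)
    also have "\<dots> = trans \<Lambda> n (s - t) (pullback g n \<rho>) q * fdd_sets \<Lambda> n s q L"
      using sum_trans_pullback[OF g Cons.prems] q by simp
    finally show "(\<Sum>r\<in>{x. x \<in> ?A \<and> pullback g n x = q}. trans \<Lambda> K (s - t) \<rho> r * fdd_sets \<Lambda> n s (pullback g n r) L)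
        = trans \<Lambda> n (s - t) (pullback g n \<rho>) q * fdd_sets \<Lambda> n s q L" .
  qed
  also have "\<dots> = fdd_sets \<Lambda> n t (pullback g n \<rho>) (x # L)" by (simp add: x)
  finally show ?case .
qed


lemma fdd_sets_restr:
  assumes "N \<le> L" "\<rho> \<in> states L"
  shows "fdd_sets \<Lambda> L t \<rho> (map (\<lambda>(s, S). (s, {r. restr N r \<in> S})) xs) = fdd_sets \<Lambda> N t (restr N \<rho>) xs"
  using fdd_sets_pullback[of N id L] assms by (simp add: restr_eq_pullback_id)

end

lemma sum_listset_fdd:
  "(\<Sum>qs\<in>listset (map (\<lambda>s. C s \<inter> states K) ss). fdd \<Lambda> K t p (zip ss qs))
     = fdd_sets \<Lambda> K t p (map (\<lambda>s. (s, C s)) ss)"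
proof (induction ss arbitrary: t p)
  case Nil thus ?case by simp
next
  case (Cons s ss)
  have fA: "finite (C s \<inter> states K)" using finite_states by simp
  have fX: "finite (listset (map (\<lambda>s. C s \<inter> states K) ss))"
    by (rule finite_listset) (auto simp: finite_states)
  have "(\<Sum>qs\<in>listset (map (\<lambda>s. C s \<inter> states K) (s # ss)). fdd \<Lambda> K t p (zip (s # ss) qs))
     = (\<Sum>a\<in>C s \<inter> states K. \<Sum>x\<in>listset (map (\<lambda>s. C s \<inter> states K) ss). fdd \<Lambda> K t p (zip (s # ss) (a # x)))"
    by (simp add: sum_set_Cons[OF fA fX])
  also have "\<dots> = (\<Sum>a\<in>C s \<inter> states K. trans \<Lambda> K (s - t) p a * fdd_sets \<Lambda> K s a (map (\<lambda>s. (s, C s)) ss))"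
    by (simp add: sum_distrib_left[symmetric] Cons.IH)
  finally show ?case by simp
qed

lemma fdd_sets_append_Cons:
  "fdd_sets \<Lambda> K t p (pre @ (T, S) # post)
     = (\<Sum>\<rho>'\<in>S \<inter> states K. fdd_sets \<Lambda> K t p (pre @ [(T, {\<rho>'})]) * fdd_sets \<Lambda> K T \<rho>' post)"
proof (induction pre arbitrary: t p)
  case Nil
  have "\<And>\<rho>'. \<rho>' \<in> S \<inter> states K \<Longrightarrow> {\<rho>'} \<inter> states K = {\<rho>'}" by auto
  thus ?case by simp
next
  case (Cons x pre)
  obtain s A where x: "x = (s, A)" by (cases x)
  have "fdd_sets \<Lambda> K t p ((x # pre) @ (T, S) # post)
      = (\<Sum>q\<in>A \<inter> states K. trans \<Lambda> K (s - t) p q *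
          (\<Sum>\<rho>'\<in>S \<inter> states K. fdd_sets \<Lambda> K s q (pre @ [(T, {\<rho>'})]) * fdd_sets \<Lambda> K T \<rho>' post))"
    by (simp add: x Cons.IH)
  also have "\<dots> = (\<Sum>q\<in>A \<inter> states K. \<Sum>\<rho>'\<in>S \<inter> states K. trans \<Lambda> K (s - t) p q *
          (fdd_sets \<Lambda> K s q (pre @ [(T, {\<rho>'})]) * fdd_sets \<Lambda> K T \<rho>' post))"
    by (simp add: sum_distrib_left)
  also have "\<dots> = (\<Sum>\<rho>'\<in>S \<inter> states K. \<Sum>q\<in>A \<inter> states K. trans \<Lambda> K (s - t) p q *
          (fdd_sets \<Lambda> K s q (pre @ [(T, {\<rho>'})]) * fdd_sets \<Lambda> K T \<rho>' post))"
    by (rule sum.swap)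
  also have "\<dots> = (\<Sum>\<rho>'\<in>S \<inter> states K. fdd_sets \<Lambda> K t p ((x # pre) @ [(T, {\<rho>'})]) * fdd_sets \<Lambda> K T \<rho>' post)"
    by (simp add: x sum_distrib_right mult.assoc)
  finally show ?case .
qed

lemma fdd_sets_sorted_list_of_set_from:
  fixes J :: "real set"
  assumes \<rho>: "\<rho> \<in> states n" and J: "finite J" "J \<subseteq> {t..}"
  shows "fdd_sets \<Lambda> n t \<rho> (map (\<lambda>s. (s, C s)) (sorted_list_of_set J))
       = (if t \<in> J \<and> \<rho> \<notin> C t then 0 else fdd_sets \<Lambda> n t \<rho> (map (\<lambda>s. (s, C s)) (sorted_list_of_set (J - {t}))))"
proof (cases "t \<in> J")
  case True
  have "\<forall>x\<in>J - {t}. t < x" using J(2) by force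
  hence "sorted_list_of_set J = t # sorted_list_of_set (J - {t})"
    using sorted_list_of_set_split[of "{}" "J - {t}" t] J(1) True by (simp add: insert_absorb)
  thus ?thesis using True by (simp only: list.map fdd_sets_Cons_same_time[OF \<rho>]) simp
qed simp

section \<open>Cylinder events and the Markov property at a fixed time\<close>

locale coalescent = lambda_measure +
  fixes M :: "'a measure" and Pr :: "real \<Rightarrow> 'a \<Rightarrow> nat set set"
  assumes lambda_coalescent: "lambda_coalescent \<Lambda> M 0 Pr"
begin

definition cylinder :: "nat \<Rightarrow> real set \<Rightarrow> (real \<Rightarrow> nat set set set) \<Rightarrow> 'a set" where
  "cylinder K J C = {\<omega>\<in>space M. \<forall>s\<in>J. restr K (Pr s \<omega>) \<in> C s}"

lemma prob_space_M: "prob_space M"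
  using lambda_coalescent by (simp add: lambda_coalescent_def)

lemma is_part_Pr: "0 \<le> t \<Longrightarrow> \<omega> \<in> space M \<Longrightarrow> is_part UNIV (Pr t \<omega>)"
  using lambda_coalescent by (simp add: lambda_coalescent_def)

lemma restr_Pr_states: "0 \<le> t \<Longrightarrow> \<omega> \<in> space M \<Longrightarrow> restr K (Pr t \<omega>) \<in> states K"
  by (rule restr_states[OF is_part_Pr])

lemma restr_Pr_eq_sets: "0 \<le> t \<Longrightarrow> {\<omega>\<in>space M. restr K (Pr t \<omega>) = p} \<in> sets M"
  using lambda_coalescent by (simp add: lambda_coalescent_def)

lemma restr_Pr_in_sets:
  assumes "0 \<le> t"
  shows "{\<omega>\<in>space M. restr K (Pr t \<omega>) \<in> S} \<in> sets M"
proof -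
  have "{\<omega>\<in>space M. restr K (Pr t \<omega>) \<in> S} = (\<Union>p\<in>S \<inter> states K. {\<omega>\<in>space M. restr K (Pr t \<omega>) = p})"
    using restr_Pr_states[OF assms] by auto
  also have "\<dots> \<in> sets M" using restr_Pr_eq_sets[OF assms] finite_states by auto
  finally show ?thesis .
qed

lemma cylinder_sets: "finite J \<Longrightarrow> J \<subseteq> {0..} \<Longrightarrow> cylinder K J C \<in> sets M"
  unfolding cylinder_def
  by (rule sets.sets_Collect_finite_All) (auto intro: restr_Pr_in_sets)

lemma measure_restr_Pr_eq_fdd:
  "sorted_wrt (<) (map fst xs) \<Longrightarrow> \<forall>x\<in>set xs. 0 \<le> fst x \<and> snd x \<in> states n \<Longrightarrow>
   measure M {\<omega>\<in>space M. \<forall>x\<in>set xs. restr n (Pr (fst x) \<omega>) = snd x} = fdd \<Lambda> n 0 (singletons {..<n}) xs"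
  using lambda_coalescent unfolding lambda_coalescent_def by blast

text \<open>A cylinder is the disjoint union, over the lists of admissible states at the times
  of \<open>J\<close>, of the events prescribing exactly those states.\<close>

lemma measure_cylinder:
  assumes J: "finite J" "J \<subseteq> {0..}"
  shows "measure M (cylinder K J C) = fdd_sets \<Lambda> K 0 (singletons {..<K}) (map (\<lambda>s. (s, C s)) (sorted_list_of_set J))"
proof -
  interpret prob_space M by (rule prob_space_M)
  define ss where "ss = sorted_list_of_set J"
  have ss: "sorted_wrt (<) ss" "set ss = J" using J by (simp_all add: ss_def)
  define Q where "Q = listset (map (\<lambda>s. C s \<inter> states K) ss)"
  define E where "E qs = {\<omega>\<in>space M. \<forall>x\<in>set (zip ss qs). restr K (Pr (fst x) \<omega>) = snd x}" for qs
  have fin: "finite Q" unfolding Q_def by (rule finite_listset) (auto simp: finite_states)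
  have Q: "qs \<in> Q \<longleftrightarrow> length qs = length ss \<and> (\<forall>i<length ss. qs ! i \<in> C (ss ! i) \<inter> states K)" for qs
    unfolding Q_def listset_iff list_all2_conv_all_nth by auto
  have E: "qs \<in> Q \<Longrightarrow> \<omega> \<in> E qs \<longleftrightarrow> \<omega> \<in> space M \<and> map (\<lambda>s. restr K (Pr s \<omega>)) ss = qs" for qs \<omega>
    using Q[of qs] Ball_set_zip_iff[of ss qs] by (auto simp: E_def list_eq_iff_nth_eq)
  have "cylinder K J C = (\<Union>qs\<in>Q. E qs)"
  proof (intro set_eqI iffI)
    fix \<omega> assume \<omega>: "\<omega> \<in> cylinder K J C"
    have "restr K (Pr s \<omega>) \<in> C s \<inter> states K" if "s \<in> set ss" for s
      using \<omega> that ss(2) J(2) restr_Pr_states by (auto simp: cylinder_def)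
    hence "map (\<lambda>s. restr K (Pr s \<omega>)) ss \<in> Q" by (simp add: Q)
    thus "\<omega> \<in> (\<Union>qs\<in>Q. E qs)" using \<omega> E by (auto simp: cylinder_def)
  next
    fix \<omega> assume "\<omega> \<in> (\<Union>qs\<in>Q. E qs)"
    then obtain qs where "qs \<in> Q" "\<omega> \<in> space M" "map (\<lambda>s. restr K (Pr s \<omega>)) ss = qs" using E by blast
    thus "\<omega> \<in> cylinder K J C" using ss(2) by (auto simp: Q cylinder_def in_set_conv_nth)
  qed
  moreover have "E qs \<in> sets M" for qs
    unfolding E_def using J(2) ss(2)
    by (intro sets.sets_Collect_finite_All) (auto intro!: restr_Pr_eq_sets dest: set_zip_leftD)
  moreover have "measure M (E qs) = fdd \<Lambda> K 0 (singletons {..<K}) (zip ss qs)" if qs: "qs \<in> Q" for qs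
    unfolding E_def
  proof (rule measure_restr_Pr_eq_fdd)
    have "length qs = length ss" using qs Q by blast
    thus "sorted_wrt (<) (map fst (zip ss qs))" using ss(1) by simp
    show "\<forall>x\<in>set (zip ss qs). 0 \<le> fst x \<and> snd x \<in> states K"
      using qs J(2) ss(2) by (auto simp: Q set_zip)
  qed
  moreover have "disjoint_family_on E Q" using E by (auto simp: disjoint_family_on_def)
  ultimately have "measure M (cylinder K J C) = (\<Sum>qs\<in>Q. fdd \<Lambda> K 0 (singletons {..<K}) (zip ss qs))"
    using finite_measure_finite_Union[OF fin, of E] by auto
  also have "\<dots> = fdd_sets \<Lambda> K 0 (singletons {..<K}) (map (\<lambda>s. (s, C s)) ss)"
    unfolding Q_def by (rule sum_listset_fdd)
  finally show ?thesis by (simp add: ss_def)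
qed

end

lemma (in finite_measure) measure_Int_proportional_sigma_sets:
  assumes G: "Int_stable G" "G \<subseteq> sets M" and A: "A \<in> sigma_sets (space M) G"
    and X: "X \<in> sets M" and F: "F \<in> sets M"
    and space: "measure M (X \<inter> F) = measure M X * c"
    and generator: "\<And>B. B \<in> G \<Longrightarrow> measure M (B \<inter> X \<inter> F) = measure M (B \<inter> X) * c"
  shows "measure M (A \<inter> X \<inter> F) = measure M (A \<inter> X) * c"
proof -
  have generated: "sigma_sets (space M) G \<subseteq> sets M" by (rule sets.sigma_sets_subset[OF G(2)])
  have "G \<subseteq> Pow (space M)" using G(2) sets.sets_into_space by blast
  from G(1) this A show ?thesis
  proof (induction rule: sigma_sets_induct_disjoint)
    case (basic B) thus ?case by (rule generator)
  next
    case empty thus ?case by simp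
  next
    case (compl B)
    have B: "B \<in> sets M" using compl(1) generated by blast
    have "(space M - B) \<inter> X \<inter> F = (X \<inter> F) - (B \<inter> X \<inter> F)" "(space M - B) \<inter> X = X - (B \<inter> X)"
      using sets.sets_into_space[OF X] by blast+
    moreover have "measure M (X \<inter> F - B \<inter> X \<inter> F) = measure M (X \<inter> F) - measure M (B \<inter> X \<inter> F)"
      "measure M (X - B \<inter> X) = measure M X - measure M (B \<inter> X)"
      using B X F by (auto intro!: finite_measure_Diff)
    ultimately show ?case using compl(2) space by (simp add: left_diff_distrib)
  next
    case (union B)
    have B: "B i \<in> sets M" for i using union(2) generated by blast
    have "disjoint_family (\<lambda>i. B i \<inter> X \<inter> F)" "disjoint_family (\<lambda>i. B i \<inter> X)"
      using union(1) unfolding disjoint_family_on_def by blast+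
    have lhs: "(\<lambda>i. measure M (B i \<inter> X \<inter> F)) sums measure M (\<Union>i. B i \<inter> X \<inter> F)"
      by (rule finite_measure_UNION) (use B X F \<open>disjoint_family (\<lambda>i. B i \<inter> X \<inter> F)\<close> in auto)
    have "(\<lambda>i. measure M (B i \<inter> X)) sums measure M (\<Union>i. B i \<inter> X)"
      by (rule finite_measure_UNION) (use B X \<open>disjoint_family (\<lambda>i. B i \<inter> X)\<close> in auto)
    hence "(\<lambda>i. measure M (B i \<inter> X \<inter> F)) sums (measure M (\<Union>i. B i \<inter> X) * c)"
      using sums_mult2[of _ _ c] union(3) by simp
    hence "measure M (\<Union>i. B i \<inter> X \<inter> F) = measure M (\<Union>i. B i \<inter> X) * c"
      using sums_unique2[OF lhs] by blast
    moreover have "(\<Union>i. B i \<inter> X \<inter> F) = (\<Union>i. B i) \<inter> X \<inter> F" "(\<Union>i. B i \<inter> X) = (\<Union>i. B i) \<inter> X" by auto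
    ultimately show ?case by simp
  qed
qed

context coalescent
begin

lemma measure_cylinder_split:
  assumes T: "0 \<le> T" and J: "finite J" "J \<subseteq> {0..<T}" and J2: "finite J2" "J2 \<subseteq> {T<..}"
  shows "measure M (cylinder K (J \<union> {T} \<union> J2) D)
     = (\<Sum>\<rho>\<in>D T \<inter> states K. fdd_sets \<Lambda> K 0 (singletons {..<K}) (map (\<lambda>s. (s, D s)) (sorted_list_of_set J) @ [(T, {\<rho>})])
                           * fdd_sets \<Lambda> K T \<rho> (map (\<lambda>s. (s, D s)) (sorted_list_of_set J2)))"
proof -
  have split: "sorted_list_of_set (J \<union> {T} \<union> J2) = sorted_list_of_set J @ T # sorted_list_of_set J2"
    using J J2 by (intro sorted_list_of_set_split) auto
  have "measure M (cylinder K (J \<union> {T} \<union> J2) D)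
      = fdd_sets \<Lambda> K 0 (singletons {..<K}) (map (\<lambda>s. (s, D s)) (sorted_list_of_set (J \<union> {T} \<union> J2)))"
    using J J2 T by (intro measure_cylinder) auto
  also have "\<dots> = fdd_sets \<Lambda> K 0 (singletons {..<K})
      (map (\<lambda>s. (s, D s)) (sorted_list_of_set J) @ (T, D T) # map (\<lambda>s. (s, D s)) (sorted_list_of_set J2))"
    unfolding split by simp
  finally show ?thesis by (rule trans[OF _ fdd_sets_append_Cons])
qed

text \<open>Past, present and future are merged into one cylinder on the finer partition of
  \<open>{..<K + N}\<close>; its probability factorises at time \<open>T\<close>, and by lumpability the future
  factor only depends on the restriction \<open>\<rho>\<close> to \<open>{..<N}\<close>.\<close>

lemma markov_cylinder:
  assumes T: "0 \<le> T" and J: "finite J" "J \<subseteq> {0..T}" and J2: "finite J2" "J2 \<subseteq> {T..}"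
    and \<rho>: "\<rho> \<in> states N"
  shows "measure M (cylinder K J C \<inter> {\<omega>\<in>space M. restr N (Pr T \<omega>) = \<rho>} \<inter> cylinder N J2 C2)
       = measure M (cylinder K J C \<inter> {\<omega>\<in>space M. restr N (Pr T \<omega>) = \<rho>})
         * fdd_sets \<Lambda> N T \<rho> (map (\<lambda>s. (s, C2 s)) (sorted_list_of_set J2))"
proof -
  define L where "L = K + N"
  define D0 where "D0 s = {r. (s \<in> J \<longrightarrow> restr K r \<in> C s) \<and> (s = T \<longrightarrow> restr N r = \<rho>)}" for s
  define D where "D s = D0 s \<inter> {r. s \<in> J2 \<longrightarrow> restr N r \<in> C2 s}" for s
  define pre where "pre = sorted_list_of_set (J - {T})"
  define post where "post = sorted_list_of_set (J2 - {T})"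
  define c where "c = fdd_sets \<Lambda> N T \<rho> (map (\<lambda>s. (s, C2 s)) post)"
  define Z where "Z = (\<Sum>\<rho>'\<in>D0 T \<inter> states L. fdd_sets \<Lambda> L 0 (singletons {..<L}) (map (\<lambda>s. (s, D0 s)) pre @ [(T, {\<rho>'})]))"
  have fin: "finite (J - {T})" "finite (J2 - {T})" and sub: "J - {T} \<subseteq> {0..<T}" "J2 - {T} \<subseteq> {T<..}"
    using J J2 by auto
  have restr_L: "restr K (restr L P) = restr K P" "restr N (restr L P) = restr N P" for P
    by (simp_all add: L_def restr_restr)
  have past: "cylinder K J C \<inter> {\<omega>\<in>space M. restr N (Pr T \<omega>) = \<rho>} = cylinder L ((J - {T}) \<union> {T} \<union> {}) D0"
    by (auto simp: cylinder_def D0_def restr_L)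
  have whole: "cylinder K J C \<inter> {\<omega>\<in>space M. restr N (Pr T \<omega>) = \<rho>} \<inter> cylinder N J2 C2
      = cylinder L ((J - {T}) \<union> {T} \<union> (J2 - {T})) D"
    by (auto simp: cylinder_def D_def D0_def restr_L)
  have "s \<notin> J2" if "s \<in> set pre" for s
    using that fin(1) sub(1) J2(2) by (force simp: pre_def)
  hence pre_D: "map (\<lambda>s. (s, D s)) pre = map (\<lambda>s. (s, D0 s)) pre"
    by (auto simp: D_def)
  have post_D: "fdd_sets \<Lambda> L T \<rho>' (map (\<lambda>s. (s, D s)) post) = c" if \<rho>': "\<rho>' \<in> D0 T \<inter> states L" for \<rho>'
  proof -
    have "s \<notin> J" "s \<noteq> T" "s \<in> J2" if "s \<in> set post" for s
      using that fin(2) sub(2) J(2) by (force simp: post_def)+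
    hence post_eq: "map (\<lambda>s. (s, D s)) post = map (\<lambda>(s, S). (s, {r. restr N r \<in> S})) (map (\<lambda>s. (s, C2 s)) post)"
      by (auto simp: D_def D0_def)
    have "N \<le> L" "\<rho>' \<in> states L" "restr N \<rho>' = \<rho>" using \<rho>' by (auto simp: L_def D0_def)
    thus ?thesis unfolding post_eq c_def by (simp only: fdd_sets_restr)
  qed
  have "measure M (cylinder K J C \<inter> {\<omega>\<in>space M. restr N (Pr T \<omega>) = \<rho>}) = Z"
    unfolding past measure_cylinder_split[OF T fin(1) sub(1) finite.emptyI empty_subsetI] by (simp add: Z_def pre_def)
  moreover have "measure M (cylinder K J C \<inter> {\<omega>\<in>space M. restr N (Pr T \<omega>) = \<rho>} \<inter> cylinder N J2 C2)
      = (if T \<in> J2 \<and> \<rho> \<notin> C2 T then 0 else Z * c)"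
  proof -
    have "(\<Sum>\<rho>'\<in>D0 T \<inter> states L. fdd_sets \<Lambda> L 0 (singletons {..<L}) (map (\<lambda>s. (s, D0 s)) pre @ [(T, {\<rho>'})])
        * fdd_sets \<Lambda> L T \<rho>' (map (\<lambda>s. (s, D s)) post)) = Z * c"
      unfolding Z_def sum_distrib_right by (rule sum.cong[OF refl]) (simp add: post_D)
    moreover have "D T \<inter> states L = (if T \<in> J2 \<and> \<rho> \<notin> C2 T then {} else D0 T \<inter> states L)"
      by (auto simp: D_def D0_def)
    ultimately show ?thesis
      unfolding whole measure_cylinder_split[OF T fin(1) sub(1) fin(2) sub(2), folded pre_def post_def] pre_D
      by simp
  qed
  moreover have "fdd_sets \<Lambda> N T \<rho> (map (\<lambda>s. (s, C2 s)) (sorted_list_of_set J2))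
      = (if T \<in> J2 \<and> \<rho> \<notin> C2 T then 0 else c)"
    using fdd_sets_sorted_list_of_set_from[OF \<rho> J2] by (simp add: c_def post_def)
  ultimately show ?thesis by simp
qed

definition cylinders :: "real \<Rightarrow> 'a set set" where
  "cylinders T = {cylinder K J C | K J C. finite J \<and> J \<subseteq> {0..T}}"

lemma cylinder_Int:
  "cylinder K J C \<inter> cylinder K' J' C'
     = cylinder (K + K') (J \<union> J') (\<lambda>s. {r. (s \<in> J \<longrightarrow> restr K r \<in> C s) \<and> (s \<in> J' \<longrightarrow> restr K' r \<in> C' s)})"
proof -
  have "restr K (restr (K + K') P) = restr K P" "restr K' (restr (K + K') P) = restr K' P" for P
    by (simp_all add: restr_restr)
  thus ?thesis by (auto simp: cylinder_def)
qed

lemma Int_stable_cylinders: "Int_stable (cylinders T)"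
proof (rule Int_stableI)
  fix A B assume "A \<in> cylinders T" "B \<in> cylinders T"
  then obtain K J C K' J' C' where "A = cylinder K J C" "finite J" "J \<subseteq> {0..T}"
    and "B = cylinder K' J' C'" "finite J'" "J' \<subseteq> {0..T}"
    unfolding cylinders_def by blast
  hence "A \<inter> B = cylinder (K + K') (J \<union> J')
      (\<lambda>s. {r. (s \<in> J \<longrightarrow> restr K r \<in> C s) \<and> (s \<in> J' \<longrightarrow> restr K' r \<in> C' s)})"
    "finite (J \<union> J')" "J \<union> J' \<subseteq> {0..T}"
    by (simp_all add: cylinder_Int)
  thus "A \<inter> B \<in> cylinders T" unfolding cylinders_def by blast
qed

lemma cylinders_sets: "cylinders T \<subseteq> sets M"
  unfolding cylinders_def by (auto intro!: cylinder_sets)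

lemma nat_filtration_subset: "nat_filtration M Pr T \<subseteq> sigma_sets (space M) (cylinders T)"
  unfolding nat_filtration_def
proof (rule sigma_sets_subseteq, safe)
  fix s n p assume "0 \<le> s" "s \<le> T"
  moreover have "{\<omega>\<in>space M. restr n (Pr s \<omega>) = p} = cylinder n {s} (\<lambda>_. {p})"
    by (simp add: cylinder_def)
  ultimately show "{\<omega>\<in>space M. restr n (Pr s \<omega>) = p} \<in> cylinders T"
    unfolding cylinders_def by fastforce
qed

lemma nat_filtration_sets: "nat_filtration M Pr T \<subseteq> sets M"
  using nat_filtration_subset sets.sigma_sets_subset[OF cylinders_sets] by blast

lemma markov_nat_filtration:
  assumes T: "0 \<le> T" and A: "A \<in> nat_filtration M Pr T" and J2: "finite J2" "J2 \<subseteq> {T..}"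
    and \<rho>: "\<rho> \<in> states N"
  shows "measure M (A \<inter> {\<omega>\<in>space M. restr N (Pr T \<omega>) = \<rho>} \<inter> cylinder N J2 C2)
       = measure M (A \<inter> {\<omega>\<in>space M. restr N (Pr T \<omega>) = \<rho>}) * fdd_sets \<Lambda> N T \<rho> (map (\<lambda>s. (s, C2 s)) (sorted_list_of_set J2))"
proof -
  interpret prob_space M by (rule prob_space_M)
  let ?X = "{\<omega>\<in>space M. restr N (Pr T \<omega>) = \<rho>}"
  have base: "measure M (B \<inter> ?X \<inter> cylinder N J2 C2)
      = measure M (B \<inter> ?X) * fdd_sets \<Lambda> N T \<rho> (map (\<lambda>s. (s, C2 s)) (sorted_list_of_set J2))"
    if "B \<in> cylinders T" for B
    using that markov_cylinder[OF T _ _ J2 \<rho>] by (auto simp: cylinders_def)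
  have "space M = cylinder 0 {} (\<lambda>_. {})" by (simp add: cylinder_def)
  hence "space M \<in> cylinders T" unfolding cylinders_def by blast
  moreover have "?X \<subseteq> space M" by blast
  ultimately have space: "measure M (?X \<inter> cylinder N J2 C2)
      = measure M ?X * fdd_sets \<Lambda> N T \<rho> (map (\<lambda>s. (s, C2 s)) (sorted_list_of_set J2))"
    using base[of "space M"] by (simp add: Int_absorb1)
  show ?thesis
  proof (rule measure_Int_proportional_sigma_sets[OF Int_stable_cylinders cylinders_sets _ _ _ space base])
    show "A \<in> sigma_sets (space M) (cylinders T)" using A nat_filtration_subset by blast
    show "?X \<in> sets M" by (rule restr_Pr_eq_sets[OF T])
    show "cylinder N J2 C2 \<in> sets M" using J2 T by (intro cylinder_sets) auto
  qed
qed

end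

section \<open>Relabelling by representatives\<close>

lemma bl_unique:
  assumes "is_part UNIV P"
  shows "\<exists>!B. B \<in> P \<and> x \<in> B"
proof -
  obtain B where B: "B \<in> P" "x \<in> B" using assms unfolding is_part_def by blast
  moreover have "C = B" if "C \<in> P" "x \<in> C" for C
    using assms that B unfolding is_part_def by blast
  ultimately show ?thesis by blast
qed

lemma bl_in:
  assumes "is_part UNIV P"
  shows "bl P x \<in> P" "x \<in> bl P x"
  using theI'[OF bl_unique[OF assms, of x]] unfolding bl_def by auto

lemma bl_eq:
  assumes "is_part UNIV P" "B \<in> P" "x \<in> B"
  shows "bl P x = B"
  unfolding bl_def by (rule the1_equality[OF bl_unique[OF assms(1)]]) (use assms(2,3) in simp)

lemma bl_eq_iff:
  assumes "is_part UNIV P" "B \<in> P"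
  shows "bl P x = B \<longleftrightarrow> x \<in> B"
  using bl_eq[OF assms] bl_in(2)[OF assms(1), of x] by auto

definition relabel :: "nat set set \<Rightarrow> (nat \<Rightarrow> nat) \<Rightarrow> nat set set" where
  "relabel P g = part_of_rel (\<lambda>i j. bl P (g i) = bl P (g j))"

lemma relabel_eq_image: "relabel P g = (\<lambda>i. {j. bl P (g i) = bl P (g j)}) ` UNIV"
  unfolding relabel_def part_of_rel_def by auto

lemma is_part_relabel: "is_part UNIV (relabel P g)"
proof -
  have "B \<inter> C = {}" if "B \<in> relabel P g" "C \<in> relabel P g" "B \<noteq> C" for B C
    using that by (auto simp: relabel_eq_image)
  thus ?thesis unfolding is_part_def by (auto simp: relabel_eq_image)
qed

lemma restr_relabel:
  assumes P: "is_part UNIV P"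
  shows "restr n (relabel P g) = pullback g n P"
proof
  show "restr n (relabel P g) \<subseteq> pullback g n P"
  proof
    fix x assume "x \<in> restr n (relabel P g)"
    then obtain i where x: "x = {j. bl P (g i) = bl P (g j)} \<inter> {..<n}" "x \<noteq> {}"
      unfolding restr_def relabel_eq_image by blast
    have "bl P (g i) = bl P (g j) \<longleftrightarrow> g j \<in> bl P (g i)" for j
      using bl_eq_iff[OF P bl_in(1)[OF P], of "g j" "g i"] by auto
    hence "x = pull_block g n (bl P (g i))" unfolding x(1) pull_block_def by auto
    thus "x \<in> pullback g n P" using bl_in(1)[OF P] x(2) unfolding pullback_def by blast
  qed
  show "pullback g n P \<subseteq> restr n (relabel P g)"
  proof
    fix x assume "x \<in> pullback g n P"
    then obtain B where B: "B \<in> P" "x = pull_block g n B" "x \<noteq> {}" unfolding pullback_def by blast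
    then obtain i where "i \<in> x" by blast
    hence "bl P (g i) = B" using B(1,2) bl_eq[OF P B(1)] by (simp add: pull_block_def)
    hence "x = {j. bl P (g i) = bl P (g j)} \<inter> {..<n}"
      unfolding B(2) pull_block_def using bl_eq_iff[OF P B(1)] by auto
    thus "x \<in> restr n (relabel P g)"
      using B(3) unfolding restr_def relabel_eq_image by blast
  qed
qed

lemma relabel_eq_singletons:
  assumes P: "is_part UNIV P" and g: "inj g" and one: "\<forall>B\<in>P. card (range g \<inter> B) = 1"
  shows "relabel P g = singletons UNIV"
proof -
  have "{j. bl P (g i) = bl P (g j)} = {i}" for i
  proof (intro set_eqI iffI)
    fix j assume "j \<in> {j. bl P (g i) = bl P (g j)}"
    hence "g i \<in> range g \<inter> bl P (g i)" "g j \<in> range g \<inter> bl P (g i)"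
      using bl_in(2)[OF P] by auto
    moreover have "card (range g \<inter> bl P (g i)) = 1" using one bl_in(1)[OF P] by blast
    ultimately have "g i = g j" by (metis card_1_singletonE singletonD)
    thus "j \<in> {i}" using g by (simp add: inj_eq)
  qed simp
  thus ?thesis unfolding relabel_eq_image singletons_def by simp
qed

lemma card_less_in_range_strict_mono:
  assumes "strict_mono (w :: nat \<Rightarrow> nat)"
  shows "card {m. m < w k \<and> m \<in> range w} = k"
proof -
  have "{m. m < w k \<and> m \<in> range w} = w ` {..<k}"
    using strict_mono_less[OF assms] by auto
  moreover have "inj_on w {..<k}" using strict_mono_imp_inj_on[OF assms] inj_on_subset by blast
  ultimately show ?thesis by (simp add: card_image)
qed

lemma strict_mono_eq_iff_card:
  assumes "strict_mono (w :: nat \<Rightarrow> nat)"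
  shows "w i = v \<longleftrightarrow> v \<in> range w \<and> card {m. m < v \<and> m \<in> range w} = i"
  using card_less_in_range_strict_mono[OF assms] by auto

text \<open>\<open>w i = v\<close> iff \<open>v\<close> is in the range and exactly \<open>i\<close> points of the range lie
  below \<open>v\<close>, so the values of \<open>w\<close> are measurable as soon as its range is.\<close>

lemma (in sigma_algebra) strict_mono_eq_sets:
  fixes w :: "'a \<Rightarrow> nat \<Rightarrow> nat"
  assumes mono: "\<forall>\<omega>\<in>\<Omega>. strict_mono (w \<omega>)" and range: "\<forall>m. {\<omega>\<in>\<Omega>. m \<in> range (w \<omega>)} \<in> M"
  shows "{\<omega>\<in>\<Omega>. w \<omega> i = v} \<in> M"
proof -
  have range_eq: "{\<omega>\<in>\<Omega>. m \<in> range (w \<omega>) \<longleftrightarrow> m \<in> Z} \<in> M" for m Z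
  proof (cases "m \<in> Z")
    case False
    hence "{\<omega>\<in>\<Omega>. m \<in> range (w \<omega>) \<longleftrightarrow> m \<in> Z} = \<Omega> - {\<omega>\<in>\<Omega>. m \<in> range (w \<omega>)}" by auto
    thus ?thesis using range by auto
  qed (use range in simp)
  have "{\<omega>\<in>\<Omega>. w \<omega> i = v} = {\<omega>\<in>\<Omega>. v \<in> range (w \<omega>)} \<inter>
      (\<Union>Z\<in>{Z. Z \<subseteq> {..<v} \<and> card Z = i}. {\<omega>\<in>\<Omega>. \<forall>m\<in>{..<v}. m \<in> range (w \<omega>) \<longleftrightarrow> m \<in> Z})"
  proof (intro set_eqI iffI)
    fix \<omega> assume "\<omega> \<in> {\<omega>\<in>\<Omega>. w \<omega> i = v}"
    thus "\<omega> \<in> {\<omega>\<in>\<Omega>. v \<in> range (w \<omega>)} \<inter>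
      (\<Union>Z\<in>{Z. Z \<subseteq> {..<v} \<and> card Z = i}. {\<omega>\<in>\<Omega>. \<forall>m\<in>{..<v}. m \<in> range (w \<omega>) \<longleftrightarrow> m \<in> Z})"
      using strict_mono_eq_iff_card[of "w \<omega>" i v] mono
      by (intro IntI UN_I[of "{m. m < v \<and> m \<in> range (w \<omega>)}"]) auto
  next
    fix \<omega> assume "\<omega> \<in> {\<omega>\<in>\<Omega>. v \<in> range (w \<omega>)} \<inter>
      (\<Union>Z\<in>{Z. Z \<subseteq> {..<v} \<and> card Z = i}. {\<omega>\<in>\<Omega>. \<forall>m\<in>{..<v}. m \<in> range (w \<omega>) \<longleftrightarrow> m \<in> Z})"
    then obtain Z where Z: "Z \<subseteq> {..<v}" "card Z = i" "\<omega> \<in> \<Omega>" "v \<in> range (w \<omega>)"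
      "\<forall>m\<in>{..<v}. m \<in> range (w \<omega>) \<longleftrightarrow> m \<in> Z" by blast
    hence "{m. m < v \<and> m \<in> range (w \<omega>)} = Z" by auto
    thus "\<omega> \<in> {\<omega>\<in>\<Omega>. w \<omega> i = v}" using strict_mono_eq_iff_card[of "w \<omega>" i v] mono Z by auto
  qed
  also have "\<dots> \<in> M"
    using range range_eq by (intro Int finite_UN sets_Collect_finite_All) auto
  finally show ?thesis .
qed

lemma (in prob_space) measure_eq_if_proportional_on_partition:
  fixes W :: "'i::countable \<Rightarrow> 'a set"
  assumes W: "\<And>i. W i \<in> events" "disjoint_family W" "(\<Union>i. W i) = space M"
    and E: "E \<in> events" and proportional: "\<And>i. prob (W i \<inter> E) = prob (W i) * c"
  shows "prob E = c"
proof -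
  have UN: "emeasure M A = (\<integral>\<^sup>+i. emeasure M (W i \<inter> A) \<partial>count_space UNIV)" if "A \<in> events" for A
  proof -
    have "A = (\<Union>i. W i \<inter> A)" using W(3) sets.sets_into_space[OF that] by blast
    also have "emeasure M \<dots> = (\<integral>\<^sup>+i. emeasure M (W i \<inter> A) \<partial>count_space UNIV)"
      using W(1,2) that by (intro emeasure_UN_countable) (auto simp: disjoint_family_on_def)
    finally show ?thesis .
  qed
  have space: "1 = (\<integral>\<^sup>+i. emeasure M (W i) \<partial>count_space UNIV)"
    using UN[OF sets.top] W(1) emeasure_space_1 by (simp add: Int_absorb2 sets.sets_into_space)
  have "0 \<le> c"
  proof (rule ccontr)
    assume "\<not> 0 \<le> c"
    hence "emeasure M (W i) = 0" for i
      using proportional[of i] measure_nonneg[of M "W i \<inter> E"] measure_nonneg[of M "W i"]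
      by (simp add: emeasure_eq_measure zero_le_mult_iff)
    thus False using space by simp
  qed
  have "emeasure M E = (\<integral>\<^sup>+i. ennreal c * emeasure M (W i) \<partial>count_space UNIV)"
    using UN[OF E] proportional \<open>0 \<le> c\<close> by (simp add: emeasure_eq_measure ennreal_mult' mult.commute)
  also have "\<dots> = ennreal c" using space by (simp add: nn_integral_cmult)
  finally show ?thesis using \<open>0 \<le> c\<close> by (simp add: measure_def)
qed

lemma (in coalescent) measure_eq_sum_restr_Pr:
  assumes t: "0 \<le> t" and S: "S \<in> sets M"
  shows "measure M S = (\<Sum>\<rho>\<in>states K. measure M (S \<inter> {\<omega>\<in>space M. restr K (Pr t \<omega>) = \<rho>}))"
proof -
  interpret prob_space M by (rule prob_space_M)
  have "S = (\<Union>\<rho>\<in>states K. S \<inter> {\<omega>\<in>space M. restr K (Pr t \<omega>) = \<rho>})"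
    using sets.sets_into_space[OF S] restr_Pr_states[OF t] by blast
  also have "measure M \<dots> = (\<Sum>\<rho>\<in>states K. measure M (S \<inter> {\<omega>\<in>space M. restr K (Pr t \<omega>) = \<rho>}))"
  proof (rule finite_measure_finite_Union[OF finite_states])
    show "(\<lambda>\<rho>. S \<inter> {\<omega>\<in>space M. restr K (Pr t \<omega>) = \<rho>}) ` states K \<subseteq> sets M"
      using S restr_Pr_eq_sets[OF t] by blast
    show "disjoint_family_on (\<lambda>\<rho>. S \<inter> {\<omega>\<in>space M. restr K (Pr t \<omega>) = \<rho>}) (states K)"
      unfolding disjoint_family_on_def by blast
  qed
  finally show ?thesis .
qed

locale relabelled_coalescent = coalescent +
  fixes T :: real and w :: "'a \<Rightarrow> nat \<Rightarrow> nat"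
  assumes T_nonneg: "0 \<le> T"
    and strict_mono_w: "\<forall>\<omega>\<in>space M. strict_mono (w \<omega>)"
    and range_w_nat_filtration: "\<forall>m. {\<omega>\<in>space M. m \<in> range (w \<omega>)} \<in> nat_filtration M Pr T"
    and one_per_block: "\<forall>\<omega>\<in>space M. \<forall>B\<in>Pr T \<omega>. card (range (w \<omega>) \<inter> B) = 1"
begin

definition relabelled :: "real \<Rightarrow> 'a \<Rightarrow> nat set set" where
  "relabelled t \<omega> = relabel (Pr t \<omega>) (w \<omega>)"

definition prefix_event :: "nat \<Rightarrow> nat list \<Rightarrow> 'a set" where
  "prefix_event n a = {\<omega>\<in>space M. map (w \<omega>) [0..<n] = a}"

lemma prefix_event_nat_filtration: "prefix_event n a \<in> nat_filtration M Pr T"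
proof -
  interpret F: sigma_algebra "space M" "nat_filtration M Pr T"
    unfolding nat_filtration_def by (rule sigma_algebra_sigma_sets) blast
  show ?thesis
  proof (cases "length a = n")
    case True
    hence "prefix_event n a = {\<omega>\<in>space M. \<forall>i\<in>{..<n}. w \<omega> i = a ! i}"
      by (auto simp: prefix_event_def list_eq_iff_nth_eq)
    also have "\<dots> \<in> nat_filtration M Pr T"
      using F.strict_mono_eq_sets[OF strict_mono_w range_w_nat_filtration]
      by (intro F.sets_Collect_finite_All) auto
    finally show ?thesis .
  next
    case False
    hence "prefix_event n a = {}" by (auto simp: prefix_event_def)
    thus ?thesis by simp
  qed
qed

lemma prefix_event_sets: "prefix_event n a \<in> sets M"
  using prefix_event_nat_filtration nat_filtration_sets by blast

lemma prefix_eventD: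
  "\<omega> \<in> prefix_event n a \<Longrightarrow> \<omega> \<in> space M \<and> length a = n \<and> (\<forall>i<n. w \<omega> i = a ! i)"
  by (auto simp: prefix_event_def)

text \<open>\<open>Suc (sum_list a)\<close> is merely a bound for the entries of \<open>a\<close>.\<close>

lemma restr_relabelled_prefix:
  assumes t: "0 \<le> t" and \<omega>: "\<omega> \<in> prefix_event n a"
  shows "restr n (relabelled t \<omega>) = pullback ((!) a) n (restr (Suc (sum_list a)) (Pr t \<omega>))"
proof -
  note \<omega>' = prefix_eventD[OF \<omega>]
  have "restr n (relabelled t \<omega>) = pullback (w \<omega>) n (Pr t \<omega>)"
    unfolding relabelled_def using restr_relabel[OF is_part_Pr[OF t]] \<omega>' by blast
  also have "\<dots> = pullback ((!) a) n (Pr t \<omega>)" by (rule pullback_cong) (use \<omega>' in blast)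
  also have "\<dots> = pullback ((!) a) n (restr (Suc (sum_list a)) (Pr t \<omega>))"
    using \<omega>' elem_le_sum_list[of _ a] by (intro pullback_restr[symmetric]) (simp add: le_imp_less_Suc)
  finally show ?thesis .
qed

lemma relabelled_T: "\<omega> \<in> space M \<Longrightarrow> relabelled T \<omega> = singletons UNIV"
  unfolding relabelled_def
  using relabel_eq_singletons[OF is_part_Pr[OF T_nonneg]] strict_mono_w one_per_block
  by (simp add: strict_mono_imp_inj_on)

lemma pullback_restr_Pr_T:
  assumes "\<omega> \<in> prefix_event n a"
  shows "pullback ((!) a) n (restr (Suc (sum_list a)) (Pr T \<omega>)) = singletons {..<n}"
  using restr_relabelled_prefix[OF T_nonneg assms] relabelled_T prefix_eventD[OF assms]
  by (simp add: restr_singletons)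

lemma restr_relabelled_sets:
  assumes "T \<le> t"
  shows "{\<omega>\<in>space M. restr n (relabelled t \<omega>) = p} \<in> sets M"
proof -
  have t: "0 \<le> t" using assms T_nonneg by simp
  have "{\<omega>\<in>space M. restr n (relabelled t \<omega>) = p}
      = (\<Union>a. prefix_event n a \<inter> {\<omega>\<in>space M. restr (Suc (sum_list a)) (Pr t \<omega>) \<in> {r. pullback ((!) a) n r = p}})"
  proof (intro set_eqI iffI)
    fix \<omega> assume "\<omega> \<in> {\<omega>\<in>space M. restr n (relabelled t \<omega>) = p}"
    moreover have "\<omega> \<in> prefix_event n (map (w \<omega>) [0..<n])" using calculation by (simp add: prefix_event_def)
    ultimately show "\<omega> \<in> (\<Union>a. prefix_event n a \<inter> {\<omega>\<in>space M. restr (Suc (sum_list a)) (Pr t \<omega>) \<in> {r. pullback ((!) a) n r = p}})"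
      using restr_relabelled_prefix[OF t] by blast
  qed (use restr_relabelled_prefix[OF t] prefix_eventD in blast)
  also have "\<dots> \<in> sets M"
    using prefix_event_sets restr_Pr_in_sets[OF t] by (intro sets.countable_UN) blast
  finally show ?thesis .
qed

end

context relabelled_coalescent
begin

lemma measure_prefix_Int_fdd:
  assumes xs: "sorted_wrt (<) (map fst xs)" "\<forall>x\<in>set xs. T \<le> fst x \<and> snd x \<in> states n"
  shows "measure M (prefix_event n a \<inter> {\<omega>\<in>space M. \<forall>x\<in>set xs. restr n (relabelled (fst x) \<omega>) = snd x})
       = measure M (prefix_event n a) * fdd \<Lambda> n T (singletons {..<n}) xs"
proof (cases "length a = n")
  case False
  hence "prefix_event n a = {}" by (auto simp: prefix_event_def)
  thus ?thesis by simp
next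
  case True
  define K where "K = Suc (sum_list a)"
  define W where "W = prefix_event n a"
  define X where "X \<rho> = {\<omega>\<in>space M. restr K (Pr T \<omega>) = \<rho>}" for \<rho>
  define J where "J = fst ` set xs"
  define C where "C s = {r. \<forall>x\<in>set xs. fst x = s \<longrightarrow> pullback ((!) a) n r = snd x}" for s
  define c where "c = fdd \<Lambda> n T (singletons {..<n}) xs"
  have a: "\<forall>i<n. a ! i < K" using True elem_le_sum_list[of _ a] by (simp add: K_def le_imp_less_Suc)
  have J: "finite J" "J \<subseteq> {T..}" and W: "W \<in> sets M" "W \<in> nat_filtration M Pr T"
    using xs(2) prefix_event_sets prefix_event_nat_filtration by (auto simp: J_def W_def)
  have "0 \<le> fst x" if "x \<in> set xs" for x using that xs(2) T_nonneg by force
  hence "W \<inter> {\<omega>\<in>space M. \<forall>x\<in>set xs. restr n (relabelled (fst x) \<omega>) = snd x} = W \<inter> cylinder K J C"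
    using restr_relabelled_prefix by (auto simp: W_def K_def J_def C_def cylinder_def)
  moreover have "measure M (W \<inter> X \<rho> \<inter> cylinder K J C) = measure M (W \<inter> X \<rho>) * c" if \<rho>: "\<rho> \<in> states K" for \<rho>
  proof -
    have "measure M (W \<inter> X \<rho> \<inter> cylinder K J C)
        = measure M (W \<inter> X \<rho>) * fdd_sets \<Lambda> K T \<rho> (map (\<lambda>s. (s, C s)) (sorted_list_of_set J))"
      unfolding X_def by (rule markov_nat_filtration[OF T_nonneg W(2) J \<rho>])
    also have "fdd_sets \<Lambda> K T \<rho> (map (\<lambda>s. (s, C s)) (sorted_list_of_set J)) = fdd \<Lambda> n T (pullback ((!) a) n \<rho>) xs"
      unfolding C_def J_def map_fibres_sorted_list_of_set[OF xs(1)] fdd_sets_pullback[OF a \<rho>]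
      using xs(2) by (simp add: fdd_eq_fdd_sets)
    finally show ?thesis
      using pullback_restr_Pr_T by (cases "W \<inter> X \<rho> = {}") (auto simp: c_def W_def X_def K_def)
  qed
  moreover have "J \<subseteq> {0..}" using J(2) T_nonneg by auto
  hence "W \<inter> cylinder K J C \<in> sets M" using W(1) cylinder_sets[OF J(1)] by blast
  ultimately show ?thesis
    using measure_eq_sum_restr_Pr[OF T_nonneg, of _ K] W(1)
    by (simp add: W_def X_def c_def Int_assoc Int_commute Int_left_commute sum_distrib_right)
qed

lemma measure_relabelled_fdd:
  assumes "sorted_wrt (<) (map fst xs)" "\<forall>x\<in>set xs. T \<le> fst x \<and> snd x \<in> states n"
  shows "measure M {\<omega>\<in>space M. \<forall>x\<in>set xs. restr n (relabelled (fst x) \<omega>) = snd x}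
       = fdd \<Lambda> n T (singletons {..<n}) xs"
proof (rule prob_space.measure_eq_if_proportional_on_partition[OF prob_space_M])
  show "prefix_event n a \<in> sets M" for a by (rule prefix_event_sets)
  show "disjoint_family (prefix_event n)" by (auto simp: disjoint_family_on_def prefix_event_def)
  show "(\<Union>a. prefix_event n a) = space M" by (auto simp: prefix_event_def)
  show "{\<omega>\<in>space M. \<forall>x\<in>set xs. restr n (relabelled (fst x) \<omega>) = snd x} \<in> sets M"
    using assms(2) by (intro sets.sets_Collect_finite_All) (auto intro: restr_relabelled_sets)
qed (rule measure_prefix_Int_fdd[OF assms])

lemma lambda_coalescent_relabelled: "lambda_coalescent \<Lambda> M T relabelled"
  unfolding lambda_coalescent_def
proof (intro conjI allI impI ballI)
  show "is_part UNIV (relabelled t \<omega>)" for t \<omega> by (simp add: relabelled_def is_part_relabel)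
  show "relabelled T \<omega> = singletons UNIV" if "\<omega> \<in> space M" for \<omega> using that by (rule relabelled_T)
  show "{\<omega>\<in>space M. restr n (relabelled t \<omega>) = p} \<in> sets M" if "T \<le> t" for t n p
    using that by (rule restr_relabelled_sets)
  show "measure M {\<omega>\<in>space M. \<forall>x\<in>set xs. restr n (relabelled (fst x) \<omega>) = snd x} = fdd \<Lambda> n T (singletons {..<n}) xs"
    if "sorted_wrt (<) (map fst xs) \<and> (\<forall>x\<in>set xs. T \<le> fst x \<and> snd x \<in> states n)" for n xs
    using that measure_relabelled_fdd by blast
qed (rule prob_space_M)

end

theorem theorem6:
  fixes \<Lambda> :: "real measure" and M :: "'a measure" and Pr :: "real \<Rightarrow> 'a \<Rightarrow> nat set set"
    and T :: real and w :: "'a \<Rightarrow> nat \<Rightarrow> nat"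
  assumes "finite_measure \<Lambda>" and "sets \<Lambda> = sets borel"
    and "emeasure \<Lambda> (- {0..1}) = 0" and "emeasure \<Lambda> {1} = 0"
    and "lambda_coalescent \<Lambda> M 0 Pr"
    and "T > 0"
    and "\<forall>\<omega>\<in>space M. strict_mono (w \<omega>)"
    and "\<forall>m. {\<omega>\<in>space M. m \<in> range (w \<omega>)} \<in> nat_filtration M Pr T"
    and "\<forall>\<omega>\<in>space M. \<forall>B\<in>Pr T \<omega>. card (range (w \<omega>) \<inter> B) = 1"
  shows "lambda_coalescent \<Lambda> M T
           (\<lambda>t \<omega>. part_of_rel (\<lambda>i j. bl (Pr t \<omega>) (w \<omega> i) = bl (Pr t \<omega>) (w \<omega> j)))"
proof -
  interpret relabelled_coalescent \<Lambda> M Pr T w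
  proof (intro relabelled_coalescent.intro coalescent.intro lambda_measure.intro
      coalescent_axioms.intro relabelled_coalescent_axioms.intro)
    show "0 \<le> T" using \<open>T > 0\<close> by simp
  qed (fact assms)+
  have "(\<lambda>t \<omega>. part_of_rel (\<lambda>i j. bl (Pr t \<omega>) (w \<omega> i) = bl (Pr t \<omega>) (w \<omega> j))) = relabelled"
    by (simp add: fun_eq_iff relabelled_def relabel_def)
  thus ?thesis using lambda_coalescent_relabelled by simp
qed

end
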